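(* Let $N\ge 1$ and, for $1\le m\le N$, let $a_m,b_m\in\mathbb{R}$ with $b_m\neq 0$. Let $f_m:\mathbb{R}\to\mathbb{R}$, $f_m\in L^2(\mathbb{R})$, with $f_m$ not identically zero for at least one $m$. Let $\mathcal{K}_m:\mathbb{R}\to\mathbb{R}$, $\mathcal{K}_m\in L^1(\mathbb{R})$, with $\mathcal{K}:=\big(\sum_{m=1}^N\|\mathcal{K}_m\|_{L^1(\mathbb{R})}^2\big)^{1/2}>0$. Let $M>0$ and, for $j=1,2$, let $g_j=(g_{j,1},\dots,g_{j,N})$ with $g_{j,m}:\mathbb{R}^N\to\mathbb{R}$ differentiable, $g_{j,m}(0)=0$, $g_j$ not identically zero on $\mathbb{R}^N$, and $\sum_{m=1}^N\|\nabla g_{j,m}\|_{L^\infty(\mathbb{R}^N)}\le M$. Let $u_0\in L^2(\mathbb{R},\mathbb{R}^N)$ be the unique solution of $L_{a_m,b_m}u_{0,m}=f_m$, $1\le m\le N$. Let $0<\rho\le1$, $B_\rho:=\{u\in L^2(\mathbb{R},\mathbb{R}^N):\|u\|_{L^2(\mathbb{R},\mathbb{R}^N)}\le\rho\}$, $\varepsilon_m\ge0$, $\varepsilon:=\max_m\varepsilon_m$, and assume $$0<\varepsilon\le\frac{\rho C}{M\mathcal{K}\big(\|u_0\|_{L^2(\mathbb{R},\mathbb{R}^N)}+1\big)}.$$ For $j=1,2$ let $T_{g_j}:B_\rho\to B_\rho$ be the map $v\mapsto u$, where $u$ is the solution of $L_{a_m,b_m}u_m=\varepsilon_m\int_{\mathbb{R}}\mathcal{K}_m(x-y)g_{j,m}(u_0(y)+v(y))dy$,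 $1\le m\le N$, let $u_{p,j}$ be the unique fixed point of $T_{g_j}$ in $B_\rho$, and set $u_j:=u_0+u_{p,j}$. Let $\sigma:=\frac{\varepsilon M\mathcal{K}}{C}$. Then $$\|u_1-u_2\|_{L^2(\mathbb{R},\mathbb{R}^N)}\le\frac{\varepsilon}{1-\sigma}\,\frac{\mathcal{K}}{C}\big(\|u_0\|_{L^2(\mathbb{R},\mathbb{R}^N)}+1\big)\sum_{m=1}^N\|\nabla g_{1,m}-\nabla g_{2,m}\|_{L^\infty(\mathbb{R}^N)}.$$
   Context: Fourier transform: $\widehat{\phi}(p)=\frac{1}{\sqrt{2\pi}}\int_{\mathbb{R}}\phi(x)e^{-ipx}dx$. The logarithmic Laplacian $\ln(-\frac{d^2}{dx^2})$ is the operator with Fourier symbol $2\ln|p|$. For $a,b\in\mathbb{R}$, $b\ne0$, the operator $L_{a,b}:=\frac12\ln\big(-\frac{d^2}{dx^2}\big)-b\frac{d}{dx}-a$ on $L^2(\mathbb{R})$ has Fourier symbol $\lambda_{a,b}(p)=\ln\big(\frac{|p|}{e^{a}}\big)-ibp$; an equation $L_{a,b}w=h$ with $w,h\in L^2(\mathbb{R})$ means $\lambda_{a,b}(p)\widehat{w}(p)=\widehat{h}(p)$ for a.e. $p$. $C>0$ is a constant with $|\lambda_{a_m,b_m}(p)|\ge C$ for all $p\in\mathbb{R}$ and all $1\le m\le N$. For $u=(u_1,\dots,u_N)^T$, $\|u\|_{L^2(\mathbb{R},\mathbb{R}^N)}^2:=\sum_m\|u_m\|_{L^2(\mathbb{R})}^2$.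 $\|\cdot\|_{L^\infty(\mathbb{R}^N)}$ of a gradient is the sup norm of its Euclidean length. Under these hypotheses (a known result) each $T_{g_j}$ is a well-defined strict contraction of $B_\rho$ into itself, so $u_{p,j}$ exists and is unique, and $\sigma<1$. *)

theory Defs
  imports "HOL-Analysis.Analysis"
begin

definition L2_fun :: "(real \<Rightarrow> real) \<Rightarrow> bool" where
  "L2_fun w \<longleftrightarrow> w \<in> borel_measurable lborel \<and> integrable lborel (\<lambda>x. (w x)^2)"

text \<open>Elements of L2(R, R^N), with R^N = real^'n (N = CARD('n)).\<close>
definition L2_vec :: "(real \<Rightarrow> real^'n) \<Rightarrow> bool" where
  "L2_vec u \<longleftrightarrow> u \<in> borel_measurable lborel \<and> integrable lborel (\<lambda>x. (norm (u x))^2)"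

definition L2_norm_vec :: "(real \<Rightarrow> real^'n) \<Rightarrow> real" where
  "L2_norm_vec u = sqrt (LINT x|lborel. (norm (u x))^2)"

text \<open>Plancherel Fourier transform on L2: phi is the L2-limit of the truncated transforms
  (1/sqrt(2 pi)) int_{-R}^{R} w(x) e^{-ipx} dx as R tends to infinity.\<close>
definition fourier_L2 :: "(real \<Rightarrow> real) \<Rightarrow> (real \<Rightarrow> complex) \<Rightarrow> bool" where
  "fourier_L2 w \<phi> \<longleftrightarrow> \<phi> \<in> borel_measurable lborel \<and> integrable lborel (\<lambda>p. (cmod (\<phi> p))^2) \<and>
     ((\<lambda>R. LINT p|lborel. (cmod (\<phi> p - complex_of_real (1 / sqrt (2*pi)) *
        (LINT x|lborel. indicator {-R..R} x * (complex_of_real (w x) * cis (-(p*x))))))^2)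
      \<longlongrightarrow> 0) at_top"

text \<open>Fourier symbol of L_{a,b}: ln(|p|/e^a) - i b p.\<close>
definition lambda_sym :: "real \<Rightarrow> real \<Rightarrow> real \<Rightarrow> complex" where
  "lambda_sym a b p = complex_of_real (ln (\<bar>p\<bar> / exp a)) - \<i> * complex_of_real (b * p)"

definition L_eq :: "real \<Rightarrow> real \<Rightarrow> (real \<Rightarrow> real) \<Rightarrow> (real \<Rightarrow> real) \<Rightarrow> bool" where
  "L_eq a b w h \<longleftrightarrow> L2_fun w \<and> L2_fun h \<and>
     (\<exists>wh hh. fourier_L2 w wh \<and> fourier_L2 h hh \<and>
        (AE p in lborel. lambda_sym a b p * wh p = hh p))"

definition grad :: "(real^'n \<Rightarrow> real) \<Rightarrow> real^'n \<Rightarrow> real^'n" where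
  "grad g z = (SOME D. (g has_derivative (\<lambda>h. inner h D)) (at z))"

definition sup_norm :: "(real^'n \<Rightarrow> real^'n) \<Rightarrow> real" where
  "sup_norm G = Sup (range (\<lambda>z. norm (G z)))"

definition conv :: "(real \<Rightarrow> real) \<Rightarrow> (real \<Rightarrow> real) \<Rightarrow> real \<Rightarrow> real" where
  "conv K G x = (LINT y|lborel. K (x - y) * G y)"

end

(*
  Write w = u_p1 - u_p2. Its m-th component solves L_{a_m,b_m} w_m = h_m with
  h_m = eps_m K_m * (g_{1,m}(u_0 + u_p1) - g_{2,m}(u_0 + u_p2)). By Plancherel's theorem and
  |lambda_{a,b}| >= C one has C ||w_m|| <= ||h_m||; Young's inequality gives
  ||K_m * G|| <= ||K_m||_1 ||G||; and the bounded gradients give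
  ||g_{1,m}(u) - g_{2,m}(v)|| <= ||grad g_{1,m}||_oo ||u - v|| + ||grad g_{1,m} - grad g_{2,m}||_oo ||v||.
  Summing over m with Cauchy-Schwarz yields
  ||w|| <= sigma ||w|| + (eps K / C) (||u_0|| + 1) sum_m ||grad g_{1,m} - grad g_{2,m}||_oo,
  which is the claim when sigma < 1. The smallness condition only gives sigma <= 1. In the borderline
  case sigma = 1 one has u_0 = 0, and since |lambda_{a,b}| > C almost everywhere the bound
  C ||w_m|| <= ||h_m|| is strict unless w_m = 0; this forces both fixed points to vanish.

  Plancherel's theorem for the L^2 Fourier transform follows for functions in L^1 and L^2 by
  regularising the power spectrum with Gaussians, and in general by truncation.
*)
theory Submission
  imports Defs "HOL-Probability.Characteristic_Functions"
begin

section \<open>Square-integrable functions on the real line\<close>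

definition L2_norm_fun :: "(real \<Rightarrow> real) \<Rightarrow> real" where
  "L2_norm_fun f = sqrt (LINT x|lborel. (f x)^2)"

lemma square_integrable_mult:
  fixes f g :: "'a \<Rightarrow> real"
  assumes [measurable]: "f \<in> borel_measurable M" "g \<in> borel_measurable M"
    and "integrable M (\<lambda>x. (f x)^2)" "integrable M (\<lambda>x. (g x)^2)"
  shows "integrable M (\<lambda>x. f x * g x)"
proof (rule Bochner_Integration.integrable_bound[where f="\<lambda>x. (f x)^2 + (g x)^2"])
  show "integrable M (\<lambda>x. (f x)^2 + (g x)^2)" using assms by auto
  have "\<bar>f x\<bar> * \<bar>g x\<bar> \<le> (f x)^2 + (g x)^2" for x
  proof -
    have "2 * \<bar>f x\<bar> * \<bar>g x\<bar> \<le> (f x)^2 + (g x)^2"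
      using sum_squares_bound[of "\<bar>f x\<bar>" "\<bar>g x\<bar>"] by (simp add: power2_abs)
    moreover have "0 \<le> \<bar>f x\<bar> * \<bar>g x\<bar>" by simp
    ultimately show ?thesis by linarith
  qed
  then show "AE x in M. norm (f x * g x) \<le> norm ((f x)^2 + (g x)^2)"
    by (intro AE_I2) (simp add: abs_mult)
qed auto

lemma Cauchy_Schwarz_integral_abs:
  fixes f g :: "'a \<Rightarrow> real"
  assumes [measurable]: "f \<in> borel_measurable M" "g \<in> borel_measurable M"
    and f2: "integrable M (\<lambda>x. (f x)^2)" and g2: "integrable M (\<lambda>x. (g x)^2)"
  shows "(LINT x|M. \<bar>f x * g x\<bar>) \<le> sqrt (LINT x|M. (f x)^2) * sqrt (LINT x|M. (g x)^2)"
proof -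
  define a where "a = sqrt (LINT x|M. (f x)^2)"
  define b where "b = sqrt (LINT x|M. (g x)^2)"
  have a_sq: "a^2 = (LINT x|M. (f x)^2)" and b_sq: "b^2 = (LINT x|M. (g x)^2)"
    unfolding a_def b_def by (auto intro!: integral_nonneg_AE)
  have fg: "integrable M (\<lambda>x. \<bar>f x * g x\<bar>)"
    using square_integrable_mult[OF assms] by auto
  show ?thesis
  proof (cases "a = 0 \<or> b = 0")
    case True
    then have "(AE x in M. f x = 0) \<or> (AE x in M. g x = 0)"
      using a_sq b_sq integral_nonneg_eq_0_iff_AE[OF f2] integral_nonneg_eq_0_iff_AE[OF g2] by auto
    then have "AE x in M. \<bar>f x * g x\<bar> = 0"
      by (elim disjE) (auto elim: AE_mp)
    then have "(LINT x|M. \<bar>f x * g x\<bar>) = 0" by (rule integral_eq_zero_AE)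
    then show ?thesis by (auto intro!: mult_nonneg_nonneg integral_nonneg_AE)
  next
    case False
    moreover have "a \<ge> 0" "b \<ge> 0" unfolding a_def b_def by (auto intro!: integral_nonneg_AE)
    ultimately have ab: "a > 0" "b > 0" by auto
    \<comment> \<open>AM-GM with the weight \<open>b / a\<close>, which balances the two integrals\<close>
    have "\<bar>f x * g x\<bar> \<le> ((b/a) * (f x)^2 + (a/b) * (g x)^2) / 2" for x
    proof -
      have "0 \<le> (b * \<bar>f x\<bar> - a * \<bar>g x\<bar>)^2" by simp
      then have "2 * (a * b) * \<bar>f x * g x\<bar> \<le> b^2 * (f x)^2 + a^2 * (g x)^2"
        by (simp add: power2_eq_square algebra_simps abs_mult)
      then show ?thesis using ab by (simp add: field_simps power2_eq_square)
    qed
    then have "(LINT x|M. \<bar>f x * g x\<bar>) \<le> (LINT x|M. ((b/a) * (f x)^2 + (a/b) * (g x)^2) / 2)"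
      using f2 g2 by (intro integral_mono fg) auto
    also have "\<dots> = ((b/a) * a^2 + (a/b) * b^2) / 2" using f2 g2 a_sq b_sq by simp
    also have "\<dots> = a * b" using ab by (simp add: power2_eq_square)
    finally show ?thesis unfolding a_def b_def .
  qed
qed

lemma Cauchy_Schwarz_integral:
  fixes f g :: "'a \<Rightarrow> real"
  assumes "f \<in> borel_measurable M" "g \<in> borel_measurable M"
    and "integrable M (\<lambda>x. (f x)^2)" "integrable M (\<lambda>x. (g x)^2)"
  shows "\<bar>LINT x|M. f x * g x\<bar> \<le> sqrt (LINT x|M. (f x)^2) * sqrt (LINT x|M. (g x)^2)"
  using Cauchy_Schwarz_integral_abs[OF assms] integral_abs_bound[of M "\<lambda>x. f x * g x"] by linarith

lemma Minkowski_integral: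
  fixes f g :: "'a \<Rightarrow> real"
  assumes [measurable]: "f \<in> borel_measurable M" "g \<in> borel_measurable M"
    and f2: "integrable M (\<lambda>x. (f x)^2)" and g2: "integrable M (\<lambda>x. (g x)^2)"
  shows "integrable M (\<lambda>x. (f x + g x)^2)"
    and "sqrt (LINT x|M. (f x + g x)^2) \<le> sqrt (LINT x|M. (f x)^2) + sqrt (LINT x|M. (g x)^2)"
proof -
  have fg: "integrable M (\<lambda>x. f x * g x)" by (rule square_integrable_mult[OF assms])
  have sq: "(\<lambda>x. (f x + g x)^2) = (\<lambda>x. (f x)^2 + 2 * (f x * g x) + (g x)^2)"
    by (simp add: power2_eq_square algebra_simps)
  show "integrable M (\<lambda>x. (f x + g x)^2)" unfolding sq using fg f2 g2 by auto
  have "(LINT x|M. (f x + g x)^2) = (LINT x|M. (f x)^2) + 2 * (LINT x|M. f x * g x) + (LINT x|M. (g x)^2)"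
    unfolding sq using fg f2 g2 by simp
  also have "\<dots> \<le> (LINT x|M. (f x)^2) + 2 * (sqrt (LINT x|M. (f x)^2) * sqrt (LINT x|M. (g x)^2))
      + (LINT x|M. (g x)^2)"
    using Cauchy_Schwarz_integral[OF assms] by linarith
  also have "\<dots> = (sqrt (LINT x|M. (f x)^2) + sqrt (LINT x|M. (g x)^2))^2"
    by (simp add: power2_sum integral_nonneg_AE)
  finally show "sqrt (LINT x|M. (f x + g x)^2) \<le> sqrt (LINT x|M. (f x)^2) + sqrt (LINT x|M. (g x)^2)"
    by (simp add: real_le_lsqrt integral_nonneg_AE)
qed

lemma L2_funD:
  assumes "L2_fun f"
  shows L2_fun_measurable: "f \<in> borel_measurable borel"
    and L2_fun_square_integrable: "integrable lborel (\<lambda>x. (f x)^2)"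
  using assms unfolding L2_fun_def by auto

lemma L2_fun_cmult: "L2_fun f \<Longrightarrow> L2_fun (\<lambda>x. c * f x)"
  unfolding L2_fun_def by (auto simp: power_mult_distrib)

lemma L2_fun_add: "L2_fun f \<Longrightarrow> L2_fun g \<Longrightarrow> L2_fun (\<lambda>x. f x + g x)"
  unfolding L2_fun_def using Minkowski_integral(1)[of f lborel g] by auto

lemma L2_fun_diff: "L2_fun f \<Longrightarrow> L2_fun g \<Longrightarrow> L2_fun (\<lambda>x. f x - g x)"
  using L2_fun_add[of f "\<lambda>x. - g x"] L2_fun_cmult[of g "-1"] by simp

lemma L2_norm_fun_nonneg: "L2_norm_fun f \<ge> 0"
  unfolding L2_norm_fun_def by (auto intro!: integral_nonneg_AE)

lemma L2_norm_fun_sq: "(L2_norm_fun f)^2 = (LINT x|lborel. (f x)^2)"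
  unfolding L2_norm_fun_def by (auto intro!: integral_nonneg_AE)

lemma L2_norm_fun_cmult: "L2_norm_fun (\<lambda>x. c * f x) = \<bar>c\<bar> * L2_norm_fun f"
  unfolding L2_norm_fun_def by (simp add: power_mult_distrib real_sqrt_mult)

lemma L2_norm_fun_triangle:
  "L2_fun f \<Longrightarrow> L2_fun g \<Longrightarrow> L2_norm_fun (\<lambda>x. f x + g x) \<le> L2_norm_fun f + L2_norm_fun g"
  unfolding L2_norm_fun_def L2_fun_def using Minkowski_integral(2)[of f lborel g] by auto

lemma L2_fun_dominated:
  assumes "L2_fun f" "g \<in> borel_measurable lborel" "AE x in lborel. \<bar>g x\<bar> \<le> c * \<bar>f x\<bar>" "c \<ge> 0"
  shows "L2_fun g" "L2_norm_fun g \<le> c * L2_norm_fun f"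
proof -
  have le: "AE x in lborel. (g x)^2 \<le> (c * f x)^2"
    using assms(3) by eventually_elim (metis abs_ge_zero abs_mult abs_of_nonneg assms(4) power2_abs power_mono)
  have cf: "integrable lborel (\<lambda>x. (c * f x)^2)" using L2_fun_cmult[OF assms(1)] L2_funD by blast
  show "L2_fun g" unfolding L2_fun_def
    by (intro conjI assms(2) Bochner_Integration.integrable_bound[OF cf]) (use assms(2) le in auto)
  then have "(LINT x|lborel. (g x)^2) \<le> (LINT x|lborel. (c * f x)^2)"
    using cf le by (intro integral_mono_AE) (auto simp: L2_fun_def)
  then have "L2_norm_fun g \<le> L2_norm_fun (\<lambda>x. c * f x)" unfolding L2_norm_fun_def by simp
  then show "L2_norm_fun g \<le> c * L2_norm_fun f" using L2_norm_fun_cmult[of c f] assms(4) by simp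
qed

lemma L2_fun_translate:
  assumes "L2_fun f"
  shows "L2_fun (\<lambda>x. f (x + z))" "L2_norm_fun (\<lambda>x. f (x + z)) = L2_norm_fun f"
proof -
  have [measurable]: "f \<in> borel_measurable borel" using assms by (rule L2_fun_measurable)
  have "integrable lborel (\<lambda>x. (f (z + 1 * x))^2)"
    using lborel_integrable_real_affine_iff[of 1 "\<lambda>x. (f x)^2" z] assms unfolding L2_fun_def by simp
  then show "L2_fun (\<lambda>x. f (x + z))" unfolding L2_fun_def by (simp add: add.commute)
  have "(LINT x|lborel. (f x)^2) = (LINT x|lborel. (f (z + 1 * x))^2)"
    using lborel_integral_real_affine[of 1 "\<lambda>x. (f x)^2" z] by simp
  then show "L2_norm_fun (\<lambda>x. f (x + z)) = L2_norm_fun f" unfolding L2_norm_fun_def by (simp add: add.commute)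
qed

section \<open>Density and continuity of translation in \<open>L\<^sup>2\<close>\<close>

lemma integrable_indicator_Icc: "integrable lborel (indicator {a..b::real} :: real \<Rightarrow> real)"
  by (rule integrable_real_indicator) (auto simp: emeasure_lborel_Icc_eq)

lemma L2_fun_indicator_Icc: "L2_fun (indicator {a..b::real} :: real \<Rightarrow> real)"
proof -
  have "(\<lambda>x. (indicator {a..b} x :: real)^2) = indicator {a..b}"
    by (auto simp: indicator_def fun_eq_iff)
  then show ?thesis unfolding L2_fun_def using integrable_indicator_Icc by simp
qed

lemma L2_dominated_convergence:
  assumes [measurable]: "\<And>n. f n \<in> borel_measurable borel" and w: "integrable lborel w"
    and dominated: "\<And>n x. (f n x)^2 \<le> w x" and lim: "AE x in lborel. (\<lambda>n. f n x) \<longlonglongrightarrow> 0"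
    and e: "e > 0"
  obtains n where "L2_fun (f n)" "L2_norm_fun (f n) < e"
proof -
  have "(\<lambda>n. LINT x|lborel. (f n x)^2) \<longlonglongrightarrow> (LINT (x::real)|lborel. 0)"
  proof (rule integral_dominated_convergence[where w=w])
    show "AE x in lborel. (\<lambda>n. (f n x)^2) \<longlonglongrightarrow> 0"
      using lim by eventually_elim (use tendsto_power[where n=2] in fastforce)
  qed (use w dominated in auto)
  then have "(\<lambda>n. L2_norm_fun (f n)) \<longlonglongrightarrow> 0"
    unfolding L2_norm_fun_def using tendsto_real_sqrt by fastforce
  from order_tendstoD(2)[OF this e] obtain n where "L2_norm_fun (f n) < e"
    by (auto simp: eventually_sequentially)
  moreover have "L2_fun (f n)" unfolding L2_fun_def
    by (auto intro!: Bochner_Integration.integrable_bound[OF w] AE_I2 order_trans[OF dominated abs_ge_self])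
  ultimately show ?thesis using that by blast
qed

lemma L2_approx_truncation:
  assumes v: "L2_fun v" and e: "e > 0"
  obtains u and B :: real where "u \<in> borel_measurable borel" "B \<ge> 0" "\<And>x. \<bar>u x\<bar> \<le> B"
    "\<And>x. B < \<bar>x\<bar> \<Longrightarrow> u x = 0" "L2_norm_fun (\<lambda>x. v x - u x) < e"
proof -
  define T where "T n x = (if \<bar>x\<bar> \<le> real n then max (- real n) (min (real n) (v x)) else 0)"
    for n :: nat and x
  have [measurable]: "v \<in> borel_measurable borel" using v by (rule L2_fun_measurable)
  have [measurable]: "T n \<in> borel_measurable borel" for n unfolding T_def by measurable
  have dominated: "(v x - T n x)^2 \<le> (v x)^2" for n x
    unfolding T_def by (auto simp: abs_le_square_iff[symmetric])
  have lim: "(\<lambda>n. v x - T n x) \<longlonglongrightarrow> 0" for x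
  proof -
    obtain N :: nat where N: "real N \<ge> max \<bar>x\<bar> \<bar>v x\<bar>" using real_arch_simple by blast
    have "eventually (\<lambda>n. v x - T n x = 0) sequentially"
      using eventually_ge_at_top[of N] by eventually_elim (use N in \<open>auto simp: T_def\<close>)
    then show ?thesis by (rule tendsto_eventually)
  qed
  obtain n where "L2_norm_fun (\<lambda>x. v x - T n x) < e"
    using L2_dominated_convergence[OF _ L2_fun_square_integrable[OF v] dominated AE_I2[OF lim] e] by auto
  then show ?thesis by (intro that[of "T n" "real n"]) (auto simp: T_def)
qed

lemma AE_limit_of_continuous:
  fixes u :: "real \<Rightarrow> real"
  assumes "u \<in> borel_measurable borel"
  obtains g where "\<And>n. continuous_on UNIV (g n)" "AE x in lborel. (\<lambda>n. g n x) \<longlonglongrightarrow> u x"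
proof -
  have "u \<in> borel_measurable lebesgue" using assms by (simp add: measurable_completion)
  then have "u measurable_on UNIV" by (rule lebesgue_measurable_imp_measurable_on) simp
  then obtain N g where N: "negligible N" and g: "\<And>n. continuous_on UNIV (g n)"
    and g_lim: "\<And>x. x \<notin> N \<Longrightarrow> (\<lambda>n. g n x) \<longlonglongrightarrow> u x"
    unfolding measurable_on_def by auto
  have "AE x in lebesgue. x \<notin> N" using N negligible_iff_null_sets AE_not_in by blast
  then have "AE x in lborel. (\<lambda>n. g n x) \<longlonglongrightarrow> u x"
    unfolding AE_completion_iff by eventually_elim (rule g_lim)
  with g show ?thesis by (rule that)
qed

lemma continuous_approx_bounded_compact_support:
  fixes u :: "real \<Rightarrow> real"
  assumes u [measurable]: "u \<in> borel_measurable borel" and uB: "\<And>x. \<bar>u x\<bar> \<le> B"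
    and uR: "\<And>x. R < \<bar>x\<bar> \<Longrightarrow> u x = 0" and R: "R \<ge> 0" and e: "e > 0"
  obtains h where "continuous_on UNIV h" "\<And>x. R + 1 < \<bar>x\<bar> \<Longrightarrow> h x = 0"
    "L2_fun (\<lambda>x. u x - h x)" "L2_norm_fun (\<lambda>x. u x - h x) < e"
proof -
  have B: "B \<ge> 0" using uB[of 0] by simp
  obtain g where g: "\<And>n. continuous_on UNIV (g n)" and g_lim: "AE x in lborel. (\<lambda>n. g n x) \<longlonglongrightarrow> u x"
    using AE_limit_of_continuous[OF u] by blast
  define cutoff where "cutoff x = max 0 (min 1 (R + 1 - \<bar>x\<bar>))" for x :: real
  define h where "h n x = cutoff x * max (- B) (min B (g n x))" for n x
  have h_cont: "continuous_on UNIV (h n)" for n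
    unfolding h_def cutoff_def by (intro continuous_intros g)
  have [measurable]: "h n \<in> borel_measurable borel" for n
    by (rule borel_measurable_continuous_onI[OF h_cont])
  have h_0: "R + 1 < \<bar>x\<bar> \<Longrightarrow> h n x = 0" for n x unfolding h_def cutoff_def by auto
  have dominated: "(u x - h n x)^2 \<le> (2 * B)^2 * indicator {-(R+1)..R+1} x" for n x
  proof (cases "\<bar>x\<bar> \<le> R + 1")
    case True
    have "\<bar>h n x\<bar> \<le> 1 * B"
      unfolding h_def abs_mult using B by (intro mult_mono) (auto simp: cutoff_def)
    then have "\<bar>u x - h n x\<bar> \<le> 2 * B" using uB[of x] by linarith
    then have "(u x - h n x)^2 \<le> (2 * B)^2" by (metis abs_ge_zero power2_abs power_mono)
    then show ?thesis using True by (simp add: abs_le_iff)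
  qed (use h_0 uR R in auto)
  have lim: "AE x in lborel. (\<lambda>n. u x - h n x) \<longlonglongrightarrow> 0"
    using g_lim
  proof eventually_elim
    fix x assume "(\<lambda>n. g n x) \<longlonglongrightarrow> u x"
    then have "(\<lambda>n. u x - h n x) \<longlonglongrightarrow> u x - cutoff x * max (- B) (min B (u x))"
      unfolding h_def by (intro tendsto_intros)
    also have "u x - cutoff x * max (- B) (min B (u x)) = 0"
      using uR[of x] uB[of x] by (cases "\<bar>x\<bar> \<le> R") (auto simp: cutoff_def abs_le_iff)
    finally show "(\<lambda>n. u x - h n x) \<longlonglongrightarrow> 0" .
  qed
  have "integrable lborel (\<lambda>x. (2 * B)^2 * indicator {-(R+1)..R+1} x :: real)"
    using integrable_indicator_Icc by simp
  then obtain n where "L2_fun (\<lambda>x. u x - h n x)" "L2_norm_fun (\<lambda>x. u x - h n x) < e"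
    using L2_dominated_convergence[OF _ _ dominated lim e] by auto
  with h_cont h_0 show ?thesis by (intro that) auto
qed

lemma L2_approx_continuous_compact_support:
  assumes v: "L2_fun v" and e: "e > 0"
  obtains h R where "continuous_on UNIV h" "R \<ge> 0" "\<And>x. R < \<bar>x\<bar> \<Longrightarrow> h x = 0" "L2_fun h"
    "L2_norm_fun (\<lambda>x. v x - h x) < e"
proof -
  obtain u B where [measurable]: "u \<in> borel_measurable borel" and B: "B \<ge> 0" and uB: "\<And>x. \<bar>u x\<bar> \<le> B"
    and uR: "\<And>x. B < \<bar>x\<bar> \<Longrightarrow> u x = 0" and vu: "L2_norm_fun (\<lambda>x. v x - u x) < e/2"
    using L2_approx_truncation[OF v, of "e/2"] e by auto
  obtain h where h_cont: "continuous_on UNIV h" and h_0: "\<And>x. B + 1 < \<bar>x\<bar> \<Longrightarrow> h x = 0"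
    and uh: "L2_fun (\<lambda>x. u x - h x)" and uh_small: "L2_norm_fun (\<lambda>x. u x - h x) < e/2"
    using continuous_approx_bounded_compact_support[of u B B "e/2"] uB uR B e by auto
  have u: "L2_fun u"
  proof (rule L2_fun_dominated(1)[where f="indicator {-B..B}" and c=B])
    show "L2_fun (indicator {-B..B})" by (rule L2_fun_indicator_Icc)
    show "AE x in lborel. \<bar>u x\<bar> \<le> B * \<bar>indicator {-B..B} x\<bar>"
      using uB uR by (intro AE_I2) (auto simp: indicator_def not_le)
  qed (use B in auto)
  have h: "L2_fun h" using L2_fun_diff[OF u uh] by simp
  have "L2_norm_fun (\<lambda>x. v x - h x) = L2_norm_fun (\<lambda>x. (v x - u x) + (u x - h x))" by simp
  also have "\<dots> \<le> L2_norm_fun (\<lambda>x. v x - u x) + L2_norm_fun (\<lambda>x. u x - h x)"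
    by (intro L2_norm_fun_triangle L2_fun_diff v u uh)
  finally have "L2_norm_fun (\<lambda>x. v x - h x) < e" using vu uh_small by simp
  with h_cont h_0 h B show ?thesis by (intro that[of h "B + 1"]) auto
qed

lemma translation_continuous_compact_support:
  assumes h_cont: "continuous_on UNIV h" and R: "R \<ge> 0" and h_0: "\<And>x. R < \<bar>x\<bar> \<Longrightarrow> h x = 0"
    and h: "L2_fun h"
  shows "((\<lambda>z. L2_norm_fun (\<lambda>x. h (x + z) - h x)) \<longlongrightarrow> 0) (at 0)"
proof (rule tendstoI)
  fix e :: real assume e: "e > 0"
  define eta where "eta = e / (2 * sqrt (2 * (R + 1)))"
  have eta: "eta > 0" "eta * sqrt (2 * (R + 1)) = e / 2" unfolding eta_def using e R by auto
  have "uniformly_continuous_on (cball 0 (R + 2)) h"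
    by (rule compact_uniformly_continuous) (auto intro: continuous_on_subset[OF h_cont])
  then obtain d where d: "d > 0"
    and h_uc: "\<And>x y. x \<in> cball 0 (R+2) \<Longrightarrow> y \<in> cball 0 (R+2) \<Longrightarrow> dist y x < d \<Longrightarrow> dist (h y) (h x) < eta"
    unfolding uniformly_continuous_on_def using eta(1) by metis
  have "L2_norm_fun (\<lambda>x. h (x + z) - h x) < e" if z: "\<bar>z\<bar> < min d 1" for z
  proof -
    have [measurable]: "h \<in> borel_measurable borel" using h by (rule L2_fun_measurable)
    have pointwise: "(h (x + z) - h x)^2 \<le> eta^2 * indicator {-(R+1)..R+1} x" for x
    proof (cases "\<bar>x\<bar> \<le> R + 1")
      case True
      have "dist (h (x + z)) (h x) < eta"
        using True z by (intro h_uc) (auto simp: dist_real_def)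
      then have "(h (x + z) - h x)^2 \<le> eta^2"
        by (metis abs_ge_zero dist_real_def less_imp_le power2_abs power_mono)
      then show ?thesis using True by (simp add: abs_le_iff)
    next
      case False
      then show ?thesis using z h_0[of x] h_0[of "x + z"] by auto
    qed
    have "(LINT x|lborel. (h (x + z) - h x)^2) \<le> (LINT x|lborel. eta^2 * indicator {-(R+1)..R+1} x)"
      using L2_fun_diff[OF L2_fun_translate(1)[OF h] h] pointwise integrable_indicator_Icc
      by (intro integral_mono) (auto simp: L2_fun_def)
    also have "\<dots> = (eta * sqrt (2 * (R + 1)))^2" using R by (simp add: power_mult_distrib)
    finally have "L2_norm_fun (\<lambda>x. h (x + z) - h x) \<le> eta * sqrt (2 * (R + 1))"
      unfolding L2_norm_fun_def by (rule real_le_lsqrt[rotated]) (use eta(1) R in simp)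
    then show ?thesis using eta e by simp
  qed
  then show "eventually (\<lambda>z. dist (L2_norm_fun (\<lambda>x. h (x + z) - h x)) 0 < e) (at 0)"
    unfolding eventually_at using d by (intro exI[of _ "min d 1"]) (auto simp: L2_norm_fun_nonneg)
qed

lemma L2_translation_continuous:
  assumes v: "L2_fun v"
  shows "((\<lambda>z. L2_norm_fun (\<lambda>x. v (x + z) - v x)) \<longlongrightarrow> 0) (at 0)"
proof (rule tendstoI)
  fix e :: real assume e: "e > 0"
  obtain h R where h_cont: "continuous_on UNIV h" and R: "R \<ge> 0" and h_0: "\<And>x. R < \<bar>x\<bar> \<Longrightarrow> h x = 0"
    and h: "L2_fun h" and vh: "L2_norm_fun (\<lambda>x. v x - h x) < e/3"
    using L2_approx_continuous_compact_support[OF v, of "e/3"] e by auto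
  have vh': "L2_fun (\<lambda>x. v x - h x)" using v h by (rule L2_fun_diff)
  have "eventually (\<lambda>z. L2_norm_fun (\<lambda>x. h (x + z) - h x) < e/3) (at 0)"
    using order_tendstoD(2)[OF translation_continuous_compact_support[OF h_cont R h_0 h], of "e/3"] e
    by simp
  then show "eventually (\<lambda>z. dist (L2_norm_fun (\<lambda>x. v (x + z) - v x)) 0 < e) (at 0)"
  proof eventually_elim
    fix z assume hz: "L2_norm_fun (\<lambda>x. h (x + z) - h x) < e/3"
    have hh: "L2_fun (\<lambda>x. h (x + z) - h x)" using L2_fun_translate(1)[OF h] h by (rule L2_fun_diff)
    have hv: "L2_fun (\<lambda>x. h x - v x)" using h v by (rule L2_fun_diff)
    have "L2_norm_fun (\<lambda>x. v (x + z) - v x)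
        = L2_norm_fun (\<lambda>x. (v (x + z) - h (x + z)) + ((h (x + z) - h x) + (h x - v x)))"
      by simp
    also have "\<dots> \<le> L2_norm_fun (\<lambda>x. v (x + z) - h (x + z))
        + L2_norm_fun (\<lambda>x. (h (x + z) - h x) + (h x - v x))"
      by (intro L2_norm_fun_triangle L2_fun_add hh hv L2_fun_translate(1)[OF vh'])
    also have "\<dots> \<le> L2_norm_fun (\<lambda>x. v (x + z) - h (x + z))
        + (L2_norm_fun (\<lambda>x. h (x + z) - h x) + L2_norm_fun (\<lambda>x. h x - v x))"
      using L2_norm_fun_triangle[OF hh hv] by simp
    also have "L2_norm_fun (\<lambda>x. v (x + z) - h (x + z)) = L2_norm_fun (\<lambda>x. v x - h x)"
      using L2_fun_translate(2)[OF vh'] by simp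
    also have "L2_norm_fun (\<lambda>x. h x - v x) = L2_norm_fun (\<lambda>x. v x - h x)"
      unfolding L2_norm_fun_def by (simp add: power2_commute)
    finally show "dist (L2_norm_fun (\<lambda>x. v (x + z) - v x)) 0 < e"
      using vh hz by (simp add: L2_norm_fun_nonneg)
  qed
qed

section \<open>Plancherel's theorem\<close>

definition gauss :: "real \<Rightarrow> real" where
  "gauss x = exp (-(x^2) / 2)"

lemma gauss_pos: "gauss x > 0"
  unfolding gauss_def by simp

lemma gauss_minus [simp]: "gauss (- x) = gauss x"
  unfolding gauss_def by simp

lemma gauss_measurable [measurable]: "gauss \<in> borel_measurable borel"
  unfolding gauss_def by measurable

lemma gauss_antimono: "\<bar>a\<bar> \<le> \<bar>b\<bar> \<Longrightarrow> gauss b \<le> gauss a"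
  unfolding gauss_def by (simp add: abs_le_square_iff)

lemma isCont_gauss: "isCont gauss x"
  unfolding gauss_def by (intro continuous_intros) auto

lemma gauss_eq_std_normal_density: "gauss x = sqrt (2 * pi) * std_normal_density x"
  unfolding gauss_def std_normal_density_def by simp

lemma integrable_gauss: "integrable lborel gauss"
  and integral_gauss: "(LINT x|lborel. gauss x) = sqrt (2 * pi)"
proof -
  have "has_bochner_integral lborel (\<lambda>x. sqrt (2 * pi) * std_normal_density x) (sqrt (2 * pi) * 1)"
    using std_normal_moment_even[of 0] by (intro has_bochner_integral_mult_right) simp
  then show "integrable lborel gauss" "(LINT x|lborel. gauss x) = sqrt (2 * pi)"
    by (auto simp: has_bochner_integral_iff gauss_eq_std_normal_density[abs_def])
qed

lemma integrable_gauss_cos: "integrable lborel (\<lambda>p. gauss p * cos (p * z))"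
  by (rule Bochner_Integration.integrable_bound[OF integrable_gauss])
     (auto simp: abs_mult gauss_pos less_imp_le intro!: mult_left_le)

lemma integral_gauss_cos: "(LINT p|lborel. gauss p * cos (p * z)) = sqrt (2 * pi) * gauss z"
proof -
  have int: "complex_integrable lborel (\<lambda>x. std_normal_density x *\<^sub>R iexp (z * x))"
  proof (rule Bochner_Integration.integrable_bound[where f=std_normal_density])
    show "integrable lborel std_normal_density"
      using std_normal_moment_even[of 0] by (simp add: has_bochner_integral_iff)
    show "AE x in lborel. norm (std_normal_density x *\<^sub>R iexp (z * x)) \<le> norm (std_normal_density x)"
      by (intro AE_I2) (simp add: norm_exp_i_times)
  qed measurable
  have "complex_of_real (gauss z) = char std_normal_distribution z"
    by (simp add: char_std_normal_distribution gauss_def)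
  also have "\<dots> = (CLINT x|lborel. std_normal_density x *\<^sub>R iexp (z * x))"
    unfolding char_def by (subst integral_density) auto
  finally have "gauss z = (LINT x|lborel. Re (std_normal_density x *\<^sub>R iexp (z * x)))"
    using integral_Re[OF int] by (metis Re_complex_of_real)
  also have "\<dots> = (LINT x|lborel. std_normal_density x * cos (x * z))"
    by (intro Bochner_Integration.integral_cong) (auto simp: Re_exp mult.commute)
  finally have "gauss z = (LINT p|lborel. std_normal_density p * cos (p * z))" .
  then show ?thesis by (simp add: gauss_eq_std_normal_density mult.assoc)
qed

lemma gauss_scaled_cos:
  assumes s: "s > 0"
  shows "integrable lborel (\<lambda>p. gauss (s * p) * cos (p * z))"
    and "(LINT p|lborel. gauss (s * p) * cos (p * z)) = sqrt (2 * pi) / s * gauss (z / s)"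
proof -
  let ?f = "\<lambda>x. gauss x * cos (x * (z / s))"
  have eq: "(\<lambda>p. gauss (s * p) * cos (p * z)) = (\<lambda>p. ?f (0 + s * p))"
    using s by (auto simp: fun_eq_iff)
  show "integrable lborel (\<lambda>p. gauss (s * p) * cos (p * z))"
    unfolding eq using lborel_integrable_real_affine_iff[of s ?f 0] s integrable_gauss_cos[of "z/s"]
    by simp
  have "integral\<^sup>L lborel ?f = s * (LINT p|lborel. ?f (0 + s * p))"
    using lborel_integral_real_affine[of s ?f 0] s by simp
  then show "(LINT p|lborel. gauss (s * p) * cos (p * z)) = sqrt (2 * pi) / s * gauss (z / s)"
    unfolding eq integral_gauss_cos using s by (simp add: field_simps)
qed

definition cos_transform :: "(real \<Rightarrow> real) \<Rightarrow> real \<Rightarrow> real" where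
  "cos_transform v p = (LINT x|lborel. v x * cos (p * x))"

definition sin_transform :: "(real \<Rightarrow> real) \<Rightarrow> real \<Rightarrow> real" where
  "sin_transform v p = (LINT x|lborel. v x * sin (p * x))"

definition autocorrelation :: "(real \<Rightarrow> real) \<Rightarrow> real \<Rightarrow> real" where
  "autocorrelation v z = (LINT x|lborel. v x * v (x + z))"

lemma integrable_mult_bounded:
  fixes v :: "real \<Rightarrow> real"
  assumes "integrable lborel v" "g \<in> borel_measurable lborel" "\<And>x. \<bar>g x\<bar> \<le> 1"
  shows "integrable lborel (\<lambda>x. v x * g x)"
proof (rule Bochner_Integration.integrable_bound[OF assms(1)])
  show "(\<lambda>x. v x * g x) \<in> borel_measurable lborel"
    using assms borel_measurable_integrable by measurable
  show "AE x in lborel. norm (v x * g x) \<le> norm (v x)"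
    using assms(3) by (intro AE_I2) (simp add: abs_mult mult_left_le)
qed

lemma abs_integral_mult_bounded_le:
  fixes v :: "real \<Rightarrow> real"
  assumes "integrable lborel v" "\<And>x. \<bar>g x\<bar> \<le> 1"
  shows "\<bar>LINT x|lborel. v x * g x\<bar> \<le> (LINT x|lborel. \<bar>v x\<bar>)"
proof -
  have "\<bar>LINT x|lborel. v x * g x\<bar> \<le> (LINT x|lborel. \<bar>v x * g x\<bar>)" by (rule integral_abs_bound)
  also have "\<dots> \<le> (LINT x|lborel. \<bar>v x\<bar>)"
    using assms by (intro integral_mono') (auto simp: abs_mult mult_left_le)
  finally show ?thesis .
qed

lemma integrable_product_measure_bound:
  fixes f g :: "real \<Rightarrow> real" and h :: "real \<times> real \<Rightarrow> real"
  assumes f: "integrable lborel f" and g: "integrable lborel g"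
    and h: "h \<in> borel_measurable (lborel \<Otimes>\<^sub>M lborel)" and bound: "\<And>x y. \<bar>h (x, y)\<bar> \<le> f x * g y"
  shows "integrable (lborel \<Otimes>\<^sub>M lborel) h"
proof -
  have [measurable]: "f \<in> borel_measurable borel" "g \<in> borel_measurable borel"
    using f g by (auto dest: borel_measurable_integrable)
  have "integrable (lborel \<Otimes>\<^sub>M lborel) (\<lambda>z. f (fst z) * g (snd z))"
    using f g by (intro lborel_pair.Fubini_integrable) (auto simp: abs_mult)
  then show ?thesis
  proof (rule Bochner_Integration.integrable_bound[OF _ h], intro AE_I2)
    fix z :: "real \<times> real"
    have "\<bar>h z\<bar> \<le> f (fst z) * g (snd z)" using bound[of "fst z" "snd z"] by simp
    then show "norm (h z) \<le> norm (f (fst z) * g (snd z))" by simp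
  qed
qed

lemma cis_measurable [measurable]: "cis \<in> borel_measurable borel"
  unfolding cis_conv_exp by measurable

lemma integrable_fourier_integrand:
  fixes v :: "real \<Rightarrow> real"
  assumes v: "integrable lborel v"
  shows "complex_integrable lborel (\<lambda>x. complex_of_real (v x) * cis (-(p * x)))"
proof -
  have [measurable]: "v \<in> borel_measurable borel" using v by (simp add: borel_measurable_integrable)
  show ?thesis by (rule Bochner_Integration.integrable_bound[OF v]) (auto intro!: AE_I2 simp: norm_mult)
qed

lemma cmod_fourier_integral_sq:
  fixes v :: "real \<Rightarrow> real"
  assumes v: "integrable lborel v"
  shows "(cmod (CLINT x|lborel. complex_of_real (v x) * cis (-(p * x))))^2
    = (cos_transform v p)^2 + (sin_transform v p)^2"
proof -
  note int = integrable_fourier_integrand[OF v, of p]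
  have "Re (CLINT x|lborel. complex_of_real (v x) * cis (-(p * x))) = cos_transform v p"
    unfolding integral_Re[OF int, symmetric] cos_transform_def by (intro Bochner_Integration.integral_cong) auto
  moreover have "Im (CLINT x|lborel. complex_of_real (v x) * cis (-(p * x))) = - sin_transform v p"
    unfolding integral_Im[OF int, symmetric] sin_transform_def
    by (subst integral_minus[symmetric]) (intro Bochner_Integration.integral_cong, auto)
  ultimately show ?thesis unfolding cmod_power2 by simp
qed

locale L1_L2 =
  fixes v :: "real \<Rightarrow> real"
  assumes integrable: "integrable lborel v" and L2: "L2_fun v"
begin

lemma v_measurable [measurable]: "v \<in> borel_measurable borel"
  using L2 by (rule L2_fun_measurable)

lemma cos_transform_measurable [measurable]: "cos_transform v \<in> borel_measurable borel"
  unfolding cos_transform_def[abs_def] by measurable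

lemma sin_transform_measurable [measurable]: "sin_transform v \<in> borel_measurable borel"
  unfolding sin_transform_def[abs_def] by measurable

lemma autocorrelation_measurable [measurable]: "autocorrelation v \<in> borel_measurable borel"
  unfolding autocorrelation_def[abs_def] by measurable

lemma integrable_mult_cos: "f \<in> borel_measurable borel \<Longrightarrow> integrable lborel (\<lambda>x. v x * cos (f x))"
  by (rule integrable_mult_bounded[OF integrable]) auto

lemma integrable_mult_sin: "f \<in> borel_measurable borel \<Longrightarrow> integrable lborel (\<lambda>x. v x * sin (f x))"
  by (rule integrable_mult_bounded[OF integrable]) auto

lemma integral_cos_shift:
  "(LINT y|lborel. v y * cos (p * (x - y))) = cos (p * x) * cos_transform v p + sin (p * x) * sin_transform v p"
proof -
  have "(LINT y|lborel. v y * cos (p * (x - y)))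
      = (LINT y|lborel. cos (p * x) * (v y * cos (p * y)) + sin (p * x) * (v y * sin (p * y)))"
    by (intro Bochner_Integration.integral_cong) (auto simp: right_diff_distrib cos_diff algebra_simps)
  also have "\<dots> = cos (p * x) * cos_transform v p + sin (p * x) * sin_transform v p"
    unfolding cos_transform_def sin_transform_def
    using integrable_mult_cos[of "\<lambda>y. p * y"] integrable_mult_sin[of "\<lambda>y. p * y"] by simp
  finally show ?thesis .
qed

lemma power_spectrum_eq:
  "(cos_transform v p)^2 + (sin_transform v p)^2
    = (LINT x|lborel. v x * (LINT y|lborel. v y * cos (p * (x - y))))"
proof -
  have "(LINT x|lborel. v x * (LINT y|lborel. v y * cos (p * (x - y))))
      = (LINT x|lborel. cos_transform v p * (v x * cos (p * x)) + sin_transform v p * (v x * sin (p * x)))"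
    unfolding integral_cos_shift by (simp add: algebra_simps)
  also have "\<dots> = (cos_transform v p)^2 + (sin_transform v p)^2"
    using integrable_mult_cos[of "\<lambda>y. p * y"] integrable_mult_sin[of "\<lambda>y. p * y"]
    by (simp add: cos_transform_def[of v p] sin_transform_def[of v p] power2_eq_square)
  finally show ?thesis ..
qed

lemma power_spectrum_gauss_Fubini:
  assumes s: "s > 0"
  shows "(LINT p|lborel. gauss (s * p) * ((cos_transform v p)^2 + (sin_transform v p)^2))
    = (LINT x|lborel. v x * (LINT p|lborel. gauss (s * p) * (LINT y|lborel. v y * cos (p * (x - y)))))"
proof -
  define N where "N = (LINT x|lborel. \<bar>v x\<bar>)"
  have "integrable (lborel \<Otimes>\<^sub>M lborel)
      (\<lambda>(x, p). gauss (s * p) * (v x * (LINT y|lborel. v y * cos (p * (x - y)))))"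
  proof (rule integrable_product_measure_bound[where f="\<lambda>x. \<bar>v x\<bar>" and g="\<lambda>p. N * gauss (s * p)"])
    show "integrable lborel (\<lambda>x. \<bar>v x\<bar>)" using integrable by simp
    show "integrable lborel (\<lambda>p. N * gauss (s * p))" using gauss_scaled_cos(1)[OF s, of 0] by simp
    fix x p
    have "\<bar>LINT y|lborel. v y * cos (p * (x - y))\<bar> \<le> N"
      unfolding N_def by (rule abs_integral_mult_bounded_le[OF integrable]) simp
    then have "\<bar>v x\<bar> * (gauss (s * p) * \<bar>LINT y|lborel. v y * cos (p * (x - y))\<bar>) \<le> \<bar>v x\<bar> * (gauss (s * p) * N)"
      using gauss_pos[of "s * p"] by (intro mult_left_mono) auto
    then show "\<bar>case (x, p) of (x, p) \<Rightarrow> gauss (s * p) * (v x * (LINT y|lborel. v y * cos (p * (x - y))))\<bar>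
        \<le> \<bar>v x\<bar> * (N * gauss (s * p))"
      by (simp add: abs_mult abs_of_pos[OF gauss_pos] mult_ac)
  qed measurable
  note Fubini = lborel_pair.Fubini_integral[OF this]
  have "(LINT p|lborel. gauss (s * p) * ((cos_transform v p)^2 + (sin_transform v p)^2))
      = (LINT p|lborel. LINT x|lborel. gauss (s * p) * (v x * (LINT y|lborel. v y * cos (p * (x - y)))))"
    unfolding power_spectrum_eq by simp
  also have "\<dots> = (LINT x|lborel. LINT p|lborel. gauss (s * p) * (v x * (LINT y|lborel. v y * cos (p * (x - y)))))"
    using Fubini by simp
  also have "\<dots> = (LINT x|lborel. v x * (LINT p|lborel. gauss (s * p) * (LINT y|lborel. v y * cos (p * (x - y)))))"
    by (intro Bochner_Integration.integral_cong refl) (simp add: mult.left_commute)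
  finally show ?thesis .
qed

lemma gauss_smoothing:
  assumes s: "s > 0"
  shows "(LINT p|lborel. gauss (s * p) * (LINT y|lborel. v y * cos (p * (x - y))))
    = sqrt (2 * pi) * (LINT u|lborel. v (x + s * u) * gauss u)"
proof -
  have "integrable (lborel \<Otimes>\<^sub>M lborel) (\<lambda>(y, p). gauss (s * p) * (v y * cos (p * (x - y))))"
  proof (rule integrable_product_measure_bound[where f="\<lambda>y. \<bar>v y\<bar>" and g="\<lambda>p. gauss (s * p)"])
    show "integrable lborel (\<lambda>y. \<bar>v y\<bar>)" using integrable by simp
    show "integrable lborel (\<lambda>p. gauss (s * p))" using gauss_scaled_cos(1)[OF s, of 0] by simp
    fix y p
    have "gauss (s * p) * \<bar>cos (p * (x - y))\<bar> \<le> gauss (s * p)"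
      using gauss_pos[of "s * p"] by (intro mult_left_le) (auto simp: less_imp_le)
    then show "\<bar>case (y, p) of (y, p) \<Rightarrow> gauss (s * p) * (v y * cos (p * (x - y)))\<bar> \<le> \<bar>v y\<bar> * gauss (s * p)"
      using gauss_pos[of "s * p"] by (simp add: abs_mult mult_left_mono mult_ac)
  qed measurable
  from lborel_pair.Fubini_integral[OF this]
  have "(LINT p|lborel. gauss (s * p) * (LINT y|lborel. v y * cos (p * (x - y))))
      = (LINT y|lborel. LINT p|lborel. gauss (s * p) * (v y * cos (p * (x - y))))"
    by simp
  also have "\<dots> = (LINT y|lborel. v y * (LINT p|lborel. gauss (s * p) * cos (p * (x - y))))"
    by (intro Bochner_Integration.integral_cong refl) (simp add: mult.left_commute)
  also have "\<dots> = (LINT y|lborel. v y * (sqrt (2 * pi) / s * gauss ((x - y) / s)))"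
    using gauss_scaled_cos(2)[OF s] by simp
  also have "\<dots> = s * (LINT u|lborel. v (x + s * u) * (sqrt (2 * pi) / s * gauss ((x - (x + s * u)) / s)))"
    using lborel_integral_real_affine[of s "\<lambda>y. v y * (sqrt (2 * pi) / s * gauss ((x - y) / s))" x] s
    by simp
  also have "\<dots> = s * (LINT u|lborel. sqrt (2 * pi) / s * (v (x + s * u) * gauss u))"
    using s by (intro arg_cong[where f="(*) s"] Bochner_Integration.integral_cong) auto
  also have "\<dots> = sqrt (2 * pi) * (LINT u|lborel. v (x + s * u) * gauss u)"
    using s by simp
  finally show ?thesis .
qed

lemma integrable_autocorrelation_integrand: "integrable lborel (\<lambda>x. v x * v (x + z))"
  using L2_fun_translate(1)[OF L2, of z] L2
  by (intro square_integrable_mult) (auto simp: L2_fun_def)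

lemma integral_abs_autocorrelation_le: "(LINT x|lborel. \<bar>v x * v (x + z)\<bar>) \<le> (LINT x|lborel. (v x)^2)"
proof -
  have "(LINT x|lborel. \<bar>v x * v (x + z)\<bar>) \<le> L2_norm_fun v * L2_norm_fun (\<lambda>x. v (x + z))"
    unfolding L2_norm_fun_def using L2_fun_translate(1)[OF L2, of z] L2
    by (intro Cauchy_Schwarz_integral_abs) (auto simp: L2_fun_def)
  then show ?thesis by (simp add: L2_fun_translate(2)[OF L2] L2_norm_fun_sq flip: power2_eq_square)
qed

lemma abs_autocorrelation_le: "\<bar>autocorrelation v z\<bar> \<le> (LINT x|lborel. (v x)^2)"
  unfolding autocorrelation_def
  using integral_abs_bound[of lborel "\<lambda>x. v x * v (x + z)"] integral_abs_autocorrelation_le[of z]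
  by linarith

lemma autocorrelation_0: "autocorrelation v 0 = (LINT x|lborel. (v x)^2)"
  unfolding autocorrelation_def by (simp add: power2_eq_square)

lemma isCont_autocorrelation_0: "isCont (autocorrelation v) 0"
proof -
  \<comment> \<open>Cauchy-Schwarz reduces continuity to the continuity of translation in \<open>L\<^sup>2\<close>\<close>
  have bound: "norm (autocorrelation v z - autocorrelation v 0)
      \<le> L2_norm_fun v * L2_norm_fun (\<lambda>x. v (x + z) - v x)" for z
  proof -
    have eq: "autocorrelation v z - autocorrelation v 0 = (LINT x|lborel. v x * (v (x + z) - v x))"
      unfolding autocorrelation_def
      using integrable_autocorrelation_integrand[of z] integrable_autocorrelation_integrand[of 0]
      by (simp add: right_diff_distrib)
    have "L2_fun (\<lambda>x. v (x + z) - v x)" by (intro L2_fun_diff L2_fun_translate(1) L2)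
    then have "\<bar>LINT x|lborel. v x * (v (x + z) - v x)\<bar>
        \<le> sqrt (LINT x|lborel. (v x)^2) * sqrt (LINT x|lborel. (v (x + z) - v x)^2)"
      using L2 by (intro Cauchy_Schwarz_integral) (auto simp: L2_fun_def)
    then show ?thesis unfolding eq L2_norm_fun_def by simp
  qed
  have "((\<lambda>z. L2_norm_fun v * L2_norm_fun (\<lambda>x. v (x + z) - v x)) \<longlongrightarrow> 0) (at 0)"
    by (rule tendsto_mult_right_zero[OF L2_translation_continuous[OF L2]])
  moreover have "eventually (\<lambda>z. norm (autocorrelation v z - autocorrelation v 0)
      \<le> L2_norm_fun v * L2_norm_fun (\<lambda>x. v (x + z) - v x)) (at 0)"
    using bound by simp
  ultimately have "((\<lambda>z. autocorrelation v z - autocorrelation v 0) \<longlongrightarrow> 0) (at 0)"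
    by (rule Lim_null_comparison[rotated])
  then show ?thesis unfolding isCont_def by (rule LIM_zero_cancel)
qed

lemma autocorrelation_gauss_Fubini:
  assumes s: "s > 0"
  shows "(LINT x|lborel. v x * (LINT u|lborel. v (x + s * u) * gauss u))
    = (LINT u|lborel. gauss u * autocorrelation v (s * u))"
proof -
  define V where "V = (LINT x|lborel. (v x)^2)"
  have "integrable (lborel \<Otimes>\<^sub>M lborel) (\<lambda>z. v (snd z) * (v (snd z + s * fst z) * gauss (fst z)))"
  proof (rule lborel_pair.Fubini_integrable)
    show "integrable lborel (\<lambda>u. LINT x|lborel. norm (v (snd (u, x)) * (v (snd (u, x) + s * fst (u, x)) * gauss (fst (u, x)))))"
    proof (rule Bochner_Integration.integrable_bound[where f="\<lambda>u. V * gauss u"])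
      show "integrable lborel (\<lambda>u. V * gauss u)" using integrable_gauss by simp
      have "(LINT x|lborel. \<bar>v x * (v (x + s * u) * gauss u)\<bar>) \<le> V * gauss u" for u
        using integral_abs_autocorrelation_le[of "s * u"] gauss_pos[of u]
        by (simp add: abs_mult V_def mult_ac less_imp_le mult_right_mono)
      then show "AE u in lborel. norm (LINT x|lborel. norm (v (snd (u, x)) * (v (snd (u, x) + s * fst (u, x)) * gauss (fst (u, x)))))
          \<le> norm (V * gauss u)"
        by (intro AE_I2) (simp add: integral_nonneg_AE V_def gauss_pos less_imp_le)
    qed measurable
    show "AE u in lborel. integrable lborel (\<lambda>x. v (snd (u, x)) * (v (snd (u, x) + s * fst (u, x)) * gauss (fst (u, x))))"
      using integrable_autocorrelation_integrand by (intro AE_I2) (simp add: mult.assoc[symmetric])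
  qed measurable
  then have "integrable (lborel \<Otimes>\<^sub>M lborel) (\<lambda>(u, x). v x * (v (x + s * u) * gauss u))"
    by (simp add: case_prod_beta')
  note Fubini = lborel_pair.Fubini_integral[OF this]
  have "(LINT x|lborel. v x * (LINT u|lborel. v (x + s * u) * gauss u))
      = (LINT x|lborel. LINT u|lborel. v x * (v (x + s * u) * gauss u))"
    by simp
  also have "\<dots> = (LINT u|lborel. LINT x|lborel. v x * (v (x + s * u) * gauss u))"
    using Fubini by simp
  also have "\<dots> = (LINT u|lborel. gauss u * autocorrelation v (s * u))"
    unfolding autocorrelation_def
    by (intro Bochner_Integration.integral_cong refl) (simp add: mult.commute mult.left_commute)
  finally show ?thesis .
qed

lemma power_spectrum_gauss:
  assumes s: "s > 0"
  shows "(LINT p|lborel. gauss (s * p) * ((cos_transform v p)^2 + (sin_transform v p)^2))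
    = sqrt (2 * pi) * (LINT u|lborel. gauss u * autocorrelation v (s * u))"
proof -
  have "(LINT x|lborel. v x * (sqrt (2 * pi) * (LINT u|lborel. v (x + s * u) * gauss u)))
      = (LINT x|lborel. sqrt (2 * pi) * (v x * (LINT u|lborel. v (x + s * u) * gauss u)))"
    by (intro Bochner_Integration.integral_cong refl) (rule mult.left_commute)
  then show ?thesis
    by (simp add: power_spectrum_gauss_Fubini[OF s] gauss_smoothing[OF s] autocorrelation_gauss_Fubini[OF s])
qed

lemma tendsto_gauss_autocorrelation:
  "(\<lambda>n. LINT u|lborel. gauss u * autocorrelation v (inverse (real (Suc n)) * u))
    \<longlonglongrightarrow> (LINT u|lborel. gauss u * autocorrelation v 0)"
proof (rule integral_dominated_convergence[where w="\<lambda>u. gauss u * (LINT x|lborel. (v x)^2)"])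
  show "integrable lborel (\<lambda>u. gauss u * (LINT x|lborel. (v x)^2))" using integrable_gauss by simp
  show "AE u in lborel. (\<lambda>n. gauss u * autocorrelation v (inverse (real (Suc n)) * u))
      \<longlonglongrightarrow> gauss u * autocorrelation v 0"
  proof (rule AE_I2)
    fix u
    have "(\<lambda>n. inverse (real (Suc n)) * u) \<longlonglongrightarrow> 0 * u"
      by (intro tendsto_intros LIMSEQ_inverse_real_of_nat)
    then have "(\<lambda>n. autocorrelation v (inverse (real (Suc n)) * u)) \<longlonglongrightarrow> autocorrelation v 0"
      using isCont_tendsto_compose[OF isCont_autocorrelation_0] by simp
    then show "(\<lambda>n. gauss u * autocorrelation v (inverse (real (Suc n)) * u))
        \<longlonglongrightarrow> gauss u * autocorrelation v 0"
      by (rule tendsto_mult_left)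
  qed
  show "AE u in lborel. norm (gauss u * autocorrelation v (inverse (real (Suc n)) * u))
      \<le> gauss u * (LINT x|lborel. (v x)^2)" for n
    using gauss_pos abs_autocorrelation_le by (intro AE_I2) (simp add: abs_mult less_imp_le mult_left_mono)
qed auto

lemma power_spectrum_le: "(cos_transform v p)^2 + (sin_transform v p)^2 \<le> 2 * (LINT x|lborel. \<bar>v x\<bar>)^2"
proof -
  have "\<bar>cos_transform v p\<bar> \<le> (LINT x|lborel. \<bar>v x\<bar>)" "\<bar>sin_transform v p\<bar> \<le> (LINT x|lborel. \<bar>v x\<bar>)"
    unfolding cos_transform_def sin_transform_def
    by (rule abs_integral_mult_bounded_le[OF integrable], simp)+
  then have "(cos_transform v p)^2 \<le> (LINT x|lborel. \<bar>v x\<bar>)^2" "(sin_transform v p)^2 \<le> (LINT x|lborel. \<bar>v x\<bar>)^2"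
    by (metis abs_ge_zero power2_abs power_mono)+
  then show ?thesis by simp
qed

lemma integrable_gauss_power_spectrum:
  assumes s: "s > 0"
  shows "integrable lborel (\<lambda>p. gauss (s * p) * ((cos_transform v p)^2 + (sin_transform v p)^2))"
proof (rule Bochner_Integration.integrable_bound)
  show "integrable lborel (\<lambda>p. 2 * (LINT x|lborel. \<bar>v x\<bar>)^2 * gauss (s * p))"
    using gauss_scaled_cos(1)[OF s, of 0] by simp
  show "AE p in lborel. norm (gauss (s * p) * ((cos_transform v p)^2 + (sin_transform v p)^2))
      \<le> norm (2 * (LINT x|lborel. \<bar>v x\<bar>)^2 * gauss (s * p))"
    using power_spectrum_le gauss_pos
    by (intro AE_I2) (simp add: abs_mult less_imp_le mult.commute mult_left_mono)
qed measurable

text \<open>The Gaussian weights \<open>gauss (s * p)\<close> increase to \<open>1\<close> as \<open>s \<down> 0\<close>, while the weighted power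
  spectra are Gaussian averages of the autocorrelation, which is continuous at \<open>0\<close>.\<close>

theorem plancherel_L1_L2:
  shows "integrable lborel (\<lambda>p. (cos_transform v p)^2 + (sin_transform v p)^2)"
    and "(LINT p|lborel. (cos_transform v p)^2 + (sin_transform v p)^2) = 2 * pi * (LINT x|lborel. (v x)^2)"
proof -
  define s where "s n = inverse (real (Suc n))" for n :: nat
  define Q where "Q p = (cos_transform v p)^2 + (sin_transform v p)^2" for p
  have s: "s n > 0" for n unfolding s_def by simp
  have [measurable]: "Q \<in> borel_measurable borel" unfolding Q_def by measurable
  have Q: "0 \<le> Q p" for p unfolding Q_def by simp
  have mono: "AE p in lborel. mono (\<lambda>n. gauss (s n * p) * Q p)"
  proof (intro AE_I2 incseq_SucI mult_right_mono Q gauss_antimono)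
    fix n p
    have "s (Suc n) \<le> s n" unfolding s_def by (simp add: field_simps)
    then show "\<bar>s (Suc n) * p\<bar> \<le> \<bar>s n * p\<bar>" using s[of "Suc n"] by (simp add: abs_mult mult_right_mono)
  qed
  have pos: "AE p in lborel. 0 \<le> gauss (s n * p) * Q p" for n
    using gauss_pos Q by (intro AE_I2) (simp add: less_imp_le)
  have lim: "AE p in lborel. (\<lambda>n. gauss (s n * p) * Q p) \<longlonglongrightarrow> Q p"
  proof (rule AE_I2)
    fix p
    have "(\<lambda>n. s n * p) \<longlonglongrightarrow> 0 * p" unfolding s_def by (intro tendsto_intros LIMSEQ_inverse_real_of_nat)
    then have "(\<lambda>n. gauss (s n * p)) \<longlonglongrightarrow> gauss 0" using isCont_tendsto_compose[OF isCont_gauss] by simp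
    then show "(\<lambda>n. gauss (s n * p) * Q p) \<longlonglongrightarrow> Q p" using tendsto_mult_right[of _ _ _ "Q p"]
      by (fastforce simp: gauss_def)
  qed
  have "(\<lambda>n. LINT p|lborel. gauss (s n * p) * Q p)
      \<longlonglongrightarrow> sqrt (2 * pi) * (LINT u|lborel. gauss u * autocorrelation v 0)"
    unfolding Q_def power_spectrum_gauss[OF s] unfolding s_def
    by (intro tendsto_mult_left tendsto_gauss_autocorrelation)
  also have "sqrt (2 * pi) * (LINT u|lborel. gauss u * autocorrelation v 0) = 2 * pi * (LINT x|lborel. (v x)^2)"
    by (simp add: autocorrelation_0 integral_gauss mult.assoc[symmetric])
  finally have "(\<lambda>n. LINT p|lborel. gauss (s n * p) * Q p) \<longlonglongrightarrow> 2 * pi * (LINT x|lborel. (v x)^2)" .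
  from integral_monotone_convergence_nonneg[OF integrable_gauss_power_spectrum[OF s, folded Q_def] mono pos lim this]
  show "integrable lborel (\<lambda>p. (cos_transform v p)^2 + (sin_transform v p)^2)"
    and "(LINT p|lborel. (cos_transform v p)^2 + (sin_transform v p)^2) = 2 * pi * (LINT x|lborel. (v x)^2)"
    unfolding Q_def by auto
qed

end

definition truncated_fourier :: "(real \<Rightarrow> real) \<Rightarrow> real \<Rightarrow> real \<Rightarrow> complex" where
  "truncated_fourier w R p = complex_of_real (1 / sqrt (2*pi)) *
     (LINT x|lborel. indicator {-R..R} x * (complex_of_real (w x) * cis (-(p*x))))"

lemma fourier_L2_iff:
  "fourier_L2 w \<phi> \<longleftrightarrow> \<phi> \<in> borel_measurable lborel \<and> integrable lborel (\<lambda>p. (cmod (\<phi> p))^2) \<and>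
     ((\<lambda>R. LINT p|lborel. (cmod (\<phi> p - truncated_fourier w R p))^2) \<longlongrightarrow> 0) at_top"
  unfolding fourier_L2_def truncated_fourier_def ..

lemma L1_L2_truncation:
  assumes w: "L2_fun w"
  shows "L1_L2 (\<lambda>x. indicator {-R..R} x * w x)"
proof
  have [measurable]: "w \<in> borel_measurable borel" using w by (rule L2_fun_measurable)
  from L2_fun_indicator_Icc show "integrable lborel (\<lambda>x. indicator {-R..R} x * w x)"
    using w by (intro square_integrable_mult) (auto simp: L2_fun_def)
  show "L2_fun (\<lambda>x. indicator {-R..R} x * w x)"
    by (rule L2_fun_dominated(1)[OF w, where c=1]) (auto simp: indicator_def)
qed

lemma truncated_fourier_eq:
  "truncated_fourier w R p = complex_of_real (1 / sqrt (2*pi)) *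
     (CLINT x|lborel. complex_of_real (indicator {-R..R} x * w x) * cis (-(p*x)))"
  unfolding truncated_fourier_def
  by (intro arg_cong[where f="(*) _"] Bochner_Integration.integral_cong) (auto simp: indicator_def)

lemma truncated_fourier_measurable:
  assumes "L2_fun w"
  shows "truncated_fourier w R \<in> borel_measurable borel"
proof -
  have [measurable]: "w \<in> borel_measurable borel" using assms by (rule L2_fun_measurable)
  show ?thesis unfolding truncated_fourier_eq[abs_def] by measurable
qed

lemma cmod_truncated_fourier_sq:
  assumes "L2_fun w"
  shows "(cmod (truncated_fourier w R p))^2
    = ((cos_transform (\<lambda>x. indicator {-R..R} x * w x) p)^2
       + (sin_transform (\<lambda>x. indicator {-R..R} x * w x) p)^2) / (2 * pi)"
proof -
  have "(cmod (complex_of_real (1 / sqrt (2*pi))))^2 = 1 / (2 * pi)"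
    by (simp only: norm_of_real) (simp add: power_divide)
  then show ?thesis
    unfolding truncated_fourier_eq norm_mult power_mult_distrib
      cmod_fourier_integral_sq[OF L1_L2.integrable[OF L1_L2_truncation[OF assms]]]
    by simp
qed

lemma plancherel_truncation:
  assumes "L2_fun w"
  shows "integrable lborel (\<lambda>p. (cmod (truncated_fourier w R p))^2)"
    and "(LINT p|lborel. (cmod (truncated_fourier w R p))^2) = (LINT x|lborel. (indicator {-R..R} x * w x)^2)"
  using L1_L2.plancherel_L1_L2[OF L1_L2_truncation[OF assms]]
  by (simp_all add: cmod_truncated_fourier_sq[OF assms])

lemma tendsto_integral_truncation_sq:
  assumes "L2_fun w"
  shows "((\<lambda>R. LINT x|lborel. (indicator {-R..R} x * w x)^2) \<longlongrightarrow> (LINT x|lborel. (w x)^2)) at_top"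
proof (rule integral_dominated_convergence_at_top[where w="\<lambda>x. (w x)^2"])
  show "integrable lborel (\<lambda>x. (w x)^2)" using assms by (rule L2_fun_square_integrable)
  show "AE x in lborel. ((\<lambda>R. (indicator {-R..R} x * w x)^2) \<longlongrightarrow> (w x)^2) at_top"
  proof (rule AE_I2)
    fix x
    have "eventually (\<lambda>R. (indicator {-R..R} x * w x)^2 = (w x)^2) at_top"
      using eventually_ge_at_top[of "\<bar>x\<bar>"] by eventually_elim (auto simp: indicator_def)
    then show "((\<lambda>R. (indicator {-R..R} x * w x)^2) \<longlongrightarrow> (w x)^2) at_top" by (rule tendsto_eventually)
  qed
  show "\<forall>\<^sub>F R in at_top. AE x in lborel. norm ((indicator {-R..R} x * w x)^2) \<le> (w x)^2"
    by (intro always_eventually allI AE_I2) (simp add: indicator_def)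
qed (use assms in \<open>auto dest: L2_fun_measurable\<close>)

lemma square_integrable_cmod_diff:
  fixes f g :: "'a \<Rightarrow> complex"
  assumes [measurable]: "f \<in> borel_measurable M" "g \<in> borel_measurable M"
    and f: "integrable M (\<lambda>x. (cmod (f x))^2)" and g: "integrable M (\<lambda>x. (cmod (g x))^2)"
  shows "integrable M (\<lambda>x. (cmod (f x - g x))^2)"
    and "(LINT x|M. (cmod (f x - g x))^2) \<le> 2 * (LINT x|M. (cmod (f x))^2) + 2 * (LINT x|M. (cmod (g x))^2)"
proof -
  have le: "(cmod (f x - g x))^2 \<le> 2 * (cmod (f x))^2 + 2 * (cmod (g x))^2" for x
  proof -
    have "(cmod (f x - g x))^2 \<le> (cmod (f x) + cmod (g x))^2"
      by (simp add: power_mono norm_triangle_ineq4)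
    also have "\<dots> \<le> 2 * (cmod (f x))^2 + 2 * (cmod (g x))^2"
      using sum_squares_bound[of "cmod (f x)" "cmod (g x)"] by (simp add: power2_sum)
    finally show ?thesis .
  qed
  show int: "integrable M (\<lambda>x. (cmod (f x - g x))^2)"
    by (rule Bochner_Integration.integrable_bound[where f="\<lambda>x. 2 * (cmod (f x))^2 + 2 * (cmod (g x))^2"])
       (use f g le in \<open>auto intro!: AE_I2\<close>)
  have "(LINT x|M. (cmod (f x - g x))^2) \<le> (LINT x|M. 2 * (cmod (f x))^2 + 2 * (cmod (g x))^2)"
    by (intro integral_mono int le) (use f g in auto)
  then show "(LINT x|M. (cmod (f x - g x))^2) \<le> 2 * (LINT x|M. (cmod (f x))^2) + 2 * (LINT x|M. (cmod (g x))^2)"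
    using f g by simp
qed

lemma abs_L2_norm_complex_diff_le:
  fixes f g :: "'a \<Rightarrow> complex"
  assumes [measurable]: "f \<in> borel_measurable M" "g \<in> borel_measurable M"
    and f: "integrable M (\<lambda>x. (cmod (f x))^2)" and g: "integrable M (\<lambda>x. (cmod (g x))^2)"
  shows "\<bar>sqrt (LINT x|M. (cmod (f x))^2) - sqrt (LINT x|M. (cmod (g x))^2)\<bar>
    \<le> sqrt (LINT x|M. (cmod (f x - g x))^2)"
proof -
  have triangle: "sqrt (LINT x|M. (cmod (f x))^2)
      \<le> sqrt (LINT x|M. (cmod (g x))^2) + sqrt (LINT x|M. (cmod (f x - g x))^2)"
    if [measurable]: "f \<in> borel_measurable M" "g \<in> borel_measurable M"
      and f: "integrable M (\<lambda>x. (cmod (f x))^2)" and g: "integrable M (\<lambda>x. (cmod (g x))^2)"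
    for f g :: "'a \<Rightarrow> complex"
  proof -
    note fg = square_integrable_cmod_diff(1)[OF that]
    have "(\<lambda>x. cmod (g x)) \<in> borel_measurable M" "(\<lambda>x. cmod (f x - g x)) \<in> borel_measurable M"
      by measurable
    note Minkowski = Minkowski_integral[OF this g fg]
    have "cmod (f x) \<le> cmod (g x) + cmod (f x - g x)" for x
      using norm_triangle_ineq[of "g x" "f x - g x"] by simp
    then have "(cmod (f x))^2 \<le> (cmod (g x) + cmod (f x - g x))^2" for x
      by (simp add: power_mono)
    then have "(LINT x|M. (cmod (f x))^2) \<le> (LINT x|M. (cmod (g x) + cmod (f x - g x))^2)"
      by (intro integral_mono f Minkowski(1))
    then show ?thesis using Minkowski(2) by (meson order_trans real_sqrt_le_mono)
  qed
  show ?thesis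
    using triangle[of f g] triangle[of g f] f g by (auto simp: norm_minus_commute)
qed

theorem plancherel:
  assumes w: "L2_fun w" and \<phi>: "fourier_L2 w \<phi>"
  shows "(LINT p|lborel. (cmod (\<phi> p))^2) = (LINT x|lborel. (w x)^2)"
proof -
  have [measurable]: "\<phi> \<in> borel_measurable borel" and \<phi>2: "integrable lborel (\<lambda>p. (cmod (\<phi> p))^2)"
    and lim: "((\<lambda>R. LINT p|lborel. (cmod (\<phi> p - truncated_fourier w R p))^2) \<longlongrightarrow> 0) at_top"
    using \<phi> unfolding fourier_L2_iff by auto
  have [measurable]: "truncated_fourier w R \<in> borel_measurable borel" for R
    using w by (rule truncated_fourier_measurable)
  define a where "a R = sqrt (LINT p|lborel. (cmod (truncated_fourier w R p))^2)" for R
  define b where "b = sqrt (LINT p|lborel. (cmod (\<phi> p))^2)"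
  have "((\<lambda>R. sqrt (LINT p|lborel. (cmod (\<phi> p - truncated_fourier w R p))^2)) \<longlongrightarrow> 0) at_top"
    using tendsto_real_sqrt[OF lim] by simp
  moreover have "\<bar>a R - b\<bar> \<le> sqrt (LINT p|lborel. (cmod (\<phi> p - truncated_fourier w R p))^2)" for R
    using abs_L2_norm_complex_diff_le[of \<phi> lborel "truncated_fourier w R", OF _ _ \<phi>2 plancherel_truncation(1)[OF w]]
    unfolding a_def b_def by (simp add: abs_minus_commute)
  then have "eventually (\<lambda>R. norm (a R - b) \<le> sqrt (LINT p|lborel. (cmod (\<phi> p - truncated_fourier w R p))^2)) at_top"
    by simp
  ultimately have "((\<lambda>R. a R - b) \<longlongrightarrow> 0) at_top"
    by (rule Lim_null_comparison[rotated])
  then have "(a \<longlongrightarrow> b) at_top" by (rule LIM_zero_cancel)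
  moreover have "(a \<longlongrightarrow> sqrt (LINT x|lborel. (w x)^2)) at_top"
    unfolding a_def plancherel_truncation(2)[OF w] by (intro tendsto_real_sqrt tendsto_integral_truncation_sq w)
  ultimately have "b = sqrt (LINT x|lborel. (w x)^2)" by (rule tendsto_unique[rotated]) simp
  then show ?thesis unfolding b_def by (simp add: integral_nonneg_AE)
qed

lemma truncated_fourier_diff:
  assumes "L2_fun w1" "L2_fun w2"
  shows "truncated_fourier (\<lambda>x. w1 x - w2 x) R p = truncated_fourier w1 R p - truncated_fourier w2 R p"
proof -
  note int = integrable_fourier_integrand[OF L1_L2.integrable[OF L1_L2_truncation], of _ R p]
  have "(CLINT x|lborel. complex_of_real (indicator {-R..R} x * (w1 x - w2 x)) * cis (-(p*x)))
      = (CLINT x|lborel. complex_of_real (indicator {-R..R} x * w1 x) * cis (-(p*x))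
          - complex_of_real (indicator {-R..R} x * w2 x) * cis (-(p*x)))"
    by (intro Bochner_Integration.integral_cong) (auto simp: algebra_simps)
  also have "\<dots> = (CLINT x|lborel. complex_of_real (indicator {-R..R} x * w1 x) * cis (-(p*x)))
      - (CLINT x|lborel. complex_of_real (indicator {-R..R} x * w2 x) * cis (-(p*x)))"
    using int[OF assms(1)] int[OF assms(2)] by (rule Bochner_Integration.integral_diff)
  finally show ?thesis unfolding truncated_fourier_eq by (simp add: right_diff_distrib)
qed

lemma fourier_L2_diff:
  assumes w1: "L2_fun w1" and w2: "L2_fun w2" and \<phi>1: "fourier_L2 w1 \<phi>1" and \<phi>2: "fourier_L2 w2 \<phi>2"
  shows "fourier_L2 (\<lambda>x. w1 x - w2 x) (\<lambda>p. \<phi>1 p - \<phi>2 p)"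
proof -
  have [measurable]: "\<phi>1 \<in> borel_measurable borel" "\<phi>2 \<in> borel_measurable borel"
    and int1: "integrable lborel (\<lambda>p. (cmod (\<phi>1 p))^2)" and int2: "integrable lborel (\<lambda>p. (cmod (\<phi>2 p))^2)"
    and lim1: "((\<lambda>R. LINT p|lborel. (cmod (\<phi>1 p - truncated_fourier w1 R p))^2) \<longlongrightarrow> 0) at_top"
    and lim2: "((\<lambda>R. LINT p|lborel. (cmod (\<phi>2 p - truncated_fourier w2 R p))^2) \<longlongrightarrow> 0) at_top"
    using \<phi>1 \<phi>2 unfolding fourier_L2_iff by auto
  have [measurable]: "truncated_fourier w1 R \<in> borel_measurable borel" "truncated_fourier w2 R \<in> borel_measurable borel"
    for R using truncated_fourier_measurable[OF w1] truncated_fourier_measurable[OF w2] by auto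
  have err1: "integrable lborel (\<lambda>p. (cmod (\<phi>1 p - truncated_fourier w1 R p))^2)"
    and err2: "integrable lborel (\<lambda>p. (cmod (\<phi>2 p - truncated_fourier w2 R p))^2)" for R
    using square_integrable_cmod_diff(1) int1 int2 plancherel_truncation(1)[OF w1] plancherel_truncation(1)[OF w2]
    by measurable
  have err: "(\<phi>1 p - \<phi>2 p) - truncated_fourier (\<lambda>x. w1 x - w2 x) R p
      = (\<phi>1 p - truncated_fourier w1 R p) - (\<phi>2 p - truncated_fourier w2 R p)" for R p
    unfolding truncated_fourier_diff[OF w1 w2] by simp
  have "((\<lambda>R. LINT p|lborel. (cmod ((\<phi>1 p - \<phi>2 p) - truncated_fourier (\<lambda>x. w1 x - w2 x) R p))^2) \<longlongrightarrow> 0) at_top"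
  proof (rule tendsto_sandwich[OF always_eventually always_eventually])
    show "\<forall>R. 0 \<le> (LINT p|lborel. (cmod ((\<phi>1 p - \<phi>2 p) - truncated_fourier (\<lambda>x. w1 x - w2 x) R p))^2)"
      by (simp add: integral_nonneg_AE)
    show "\<forall>R. (LINT p|lborel. (cmod ((\<phi>1 p - \<phi>2 p) - truncated_fourier (\<lambda>x. w1 x - w2 x) R p))^2)
        \<le> 2 * (LINT p|lborel. (cmod (\<phi>1 p - truncated_fourier w1 R p))^2)
          + 2 * (LINT p|lborel. (cmod (\<phi>2 p - truncated_fourier w2 R p))^2)"
      unfolding err using square_integrable_cmod_diff(2)[OF _ _ err1 err2] by simp
    show "((\<lambda>R. 2 * (LINT p|lborel. (cmod (\<phi>1 p - truncated_fourier w1 R p))^2)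
        + 2 * (LINT p|lborel. (cmod (\<phi>2 p - truncated_fourier w2 R p))^2)) \<longlongrightarrow> 0) at_top"
      using tendsto_add[OF tendsto_mult_right_zero[OF lim1] tendsto_mult_right_zero[OF lim2]] by simp
  qed simp
  then show ?thesis
    unfolding fourier_L2_iff using square_integrable_cmod_diff(1)[OF _ _ int1 int2] by simp
qed

section \<open>The equation \<open>L\<^sub>a\<^sub>,\<^sub>b w = h\<close>\<close>

lemma L_eq_diff:
  assumes "L_eq a b w1 h1" "L_eq a b w2 h2"
  shows "L_eq a b (\<lambda>x. w1 x - w2 x) (\<lambda>x. h1 x - h2 x)"
proof -
  obtain \<omega>1 \<eta>1 where 1: "L2_fun w1" "L2_fun h1" "fourier_L2 w1 \<omega>1" "fourier_L2 h1 \<eta>1"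
      "AE p in lborel. lambda_sym a b p * \<omega>1 p = \<eta>1 p"
    using assms(1) unfolding L_eq_def by auto
  obtain \<omega>2 \<eta>2 where 2: "L2_fun w2" "L2_fun h2" "fourier_L2 w2 \<omega>2" "fourier_L2 h2 \<eta>2"
      "AE p in lborel. lambda_sym a b p * \<omega>2 p = \<eta>2 p"
    using assms(2) unfolding L_eq_def by auto
  have "AE p in lborel. lambda_sym a b p * (\<omega>1 p - \<omega>2 p) = \<eta>1 p - \<eta>2 p"
    using 1(5) 2(5) by eventually_elim (simp add: right_diff_distrib)
  with 1 2 show ?thesis
    unfolding L_eq_def by (blast intro: L2_fun_diff fourier_L2_diff)
qed

lemma L_eq_fourier:
  assumes "L_eq a b w h"
  obtains \<omega> \<eta> where "integrable lborel (\<lambda>p. (cmod (\<omega> p))^2)" "integrable lborel (\<lambda>p. (cmod (\<eta> p))^2)"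
    "(LINT p|lborel. (cmod (\<omega> p))^2) = (LINT x|lborel. (w x)^2)"
    "(LINT p|lborel. (cmod (\<eta> p))^2) = (LINT x|lborel. (h x)^2)"
    "AE p in lborel. (cmod (\<eta> p))^2 = (cmod (lambda_sym a b p))^2 * (cmod (\<omega> p))^2"
proof -
  obtain \<omega> \<eta> where L: "L2_fun w" "L2_fun h" "fourier_L2 w \<omega>" "fourier_L2 h \<eta>"
      "AE p in lborel. lambda_sym a b p * \<omega> p = \<eta> p"
    using assms unfolding L_eq_def by auto
  have "AE p in lborel. (cmod (\<eta> p))^2 = (cmod (lambda_sym a b p))^2 * (cmod (\<omega> p))^2"
    using L(5)
  proof eventually_elim
    fix p assume "lambda_sym a b p * \<omega> p = \<eta> p"
    then have "\<eta> p = lambda_sym a b p * \<omega> p" by simp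
    then show "(cmod (\<eta> p))^2 = (cmod (lambda_sym a b p))^2 * (cmod (\<omega> p))^2"
      by (simp add: norm_mult power_mult_distrib)
  qed
  moreover have "integrable lborel (\<lambda>p. (cmod (\<omega> p))^2)" "integrable lborel (\<lambda>p. (cmod (\<eta> p))^2)"
    using L(3,4) unfolding fourier_L2_def by auto
  ultimately show ?thesis
    using that plancherel[OF L(1,3)] plancherel[OF L(2,4)] by blast
qed

lemma L_eq_L2_bound:
  assumes L: "L_eq a b w h" and C: "C \<ge> 0" and C_le: "\<And>p. p \<noteq> 0 \<Longrightarrow> C \<le> cmod (lambda_sym a b p)"
  shows "C * L2_norm_fun w \<le> L2_norm_fun h"
proof -
  obtain \<omega> \<eta> where \<omega>: "integrable lborel (\<lambda>p. (cmod (\<omega> p))^2)" and \<eta>: "integrable lborel (\<lambda>p. (cmod (\<eta> p))^2)"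
    and w: "(LINT p|lborel. (cmod (\<omega> p))^2) = (LINT x|lborel. (w x)^2)"
    and h: "(LINT p|lborel. (cmod (\<eta> p))^2) = (LINT x|lborel. (h x)^2)"
    and \<eta>\<omega>: "AE p in lborel. (cmod (\<eta> p))^2 = (cmod (lambda_sym a b p))^2 * (cmod (\<omega> p))^2"
    using L_eq_fourier[OF L] .
  have "AE p in lborel. C^2 * (cmod (\<omega> p))^2 \<le> (cmod (\<eta> p))^2"
    using \<eta>\<omega> AE_lborel_singleton[of 0]
    by eventually_elim (use C C_le in \<open>auto intro!: mult_right_mono power_mono\<close>)
  then have "(LINT p|lborel. C^2 * (cmod (\<omega> p))^2) \<le> (LINT p|lborel. (cmod (\<eta> p))^2)"
    using \<omega> \<eta> by (intro integral_mono_AE) auto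
  then have "(C * L2_norm_fun w)^2 \<le> (L2_norm_fun h)^2"
    unfolding power_mult_distrib L2_norm_fun_sq using w h by simp
  then show ?thesis using L2_norm_fun_nonneg by (rule power2_le_imp_le)
qed

lemma log_quadratic_has_derivative:
  fixes a b t :: real
  assumes "t > 0"
  shows "((\<lambda>p. (ln p - a)^2 + b^2 * p^2) has_real_derivative 2 * (ln t - a + b^2 * t^2) / t) (at t)"
proof -
  have "((\<lambda>p. (ln p - a)^2 + b^2 * p^2) has_real_derivative 2 * (ln t - a) * (1 / t) + b^2 * (2 * t)) (at t)"
    using assms by (auto intro!: derivative_eq_intros simp: power2_eq_square)
  then show ?thesis using assms by (simp add: field_simps power2_eq_square)
qed

lemma log_quadratic_continuous_on:
  fixes a b x y :: real
  assumes "x > 0"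
  shows "continuous_on {x..y} (\<lambda>p. (ln p - a)^2 + b^2 * p^2)"
  using assms by (intro continuous_at_imp_continuous_on ballI DERIV_isCont[OF log_quadratic_has_derivative]) auto

lemma log_quadratic_factor_strict_mono:
  fixes a b x y :: real
  assumes "0 < x" "x < y"
  shows "ln x - a + b^2 * x^2 < ln y - a + b^2 * y^2"
proof -
  have "b^2 * x^2 \<le> b^2 * y^2" using assms by (intro mult_left_mono power_mono) auto
  moreover have "ln x < ln y" using assms by simp
  ultimately show ?thesis by simp
qed

lemma log_quadratic_strict_antimono:
  fixes a b x y :: real
  assumes "0 < x" "x < y" "ln y - a + b^2 * y^2 \<le> 0"
  shows "(ln y - a)^2 + b^2 * y^2 < (ln x - a)^2 + b^2 * x^2"
proof (rule DERIV_neg_imp_decreasing_open[OF assms(2) _ log_quadratic_continuous_on[OF assms(1)]])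
  fix t assume "x < t" "t < y"
  then have "t > 0" "ln t - a + b^2 * t^2 < 0"
    using assms log_quadratic_factor_strict_mono[of t y a b] by auto
  then show "\<exists>d. ((\<lambda>p. (ln p - a)^2 + b^2 * p^2) has_real_derivative d) (at t) \<and> d < 0"
    by (intro exI[of _ "2 * (ln t - a + b^2 * t^2) / t"] conjI log_quadratic_has_derivative)
       (auto intro: divide_neg_pos)
qed

lemma log_quadratic_strict_mono:
  fixes a b x y :: real
  assumes "0 < x" "x < y" "0 \<le> ln x - a + b^2 * x^2"
  shows "(ln x - a)^2 + b^2 * x^2 < (ln y - a)^2 + b^2 * y^2"
proof (rule DERIV_pos_imp_increasing_open[OF assms(2) _ log_quadratic_continuous_on[OF assms(1)]])
  fix t assume "x < t" "t < y"
  then have "t > 0" "ln t - a + b^2 * t^2 > 0"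
    using assms log_quadratic_factor_strict_mono[of x t a b] by auto
  then show "\<exists>d. ((\<lambda>p. (ln p - a)^2 + b^2 * p^2) has_real_derivative d) (at t) \<and> d > 0"
    by (intro exI[of _ "2 * (ln t - a + b^2 * t^2) / t"] conjI log_quadratic_has_derivative) auto
qed

lemma finite_level_set_log_quadratic:
  fixes a b c :: real
  shows "finite {p. p > 0 \<and> (ln p - a)^2 + b^2 * p^2 = c}"
proof -
  define \<phi> where "\<phi> p = (ln p - a)^2 + b^2 * p^2" for p :: real
  define S1 where "S1 = {p. p > 0 \<and> ln p - a + b^2 * p^2 \<le> 0}"
  define S2 where "S2 = {p. p > 0 \<and> ln p - a + b^2 * p^2 \<ge> 0}"
  have "inj_on \<phi> S1"
    by (rule linorder_inj_onI') (auto simp: S1_def \<phi>_def dest: log_quadratic_strict_antimono)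
  moreover have "inj_on \<phi> S2"
    by (rule linorder_inj_onI') (auto simp: S2_def \<phi>_def dest: log_quadratic_strict_mono)
  ultimately have "finite ((\<phi> -` {c} \<inter> S1) \<union> (\<phi> -` {c} \<inter> S2))"
    by (auto intro: finite_vimage_IntI)
  moreover have "{p. p > 0 \<and> (ln p - a)^2 + b^2 * p^2 = c} \<subseteq> (\<phi> -` {c} \<inter> S1) \<union> (\<phi> -` {c} \<inter> S2)"
    unfolding S1_def S2_def \<phi>_def by auto
  ultimately show ?thesis by (rule finite_subset[rotated])
qed

lemma lambda_sym_level_set_null: "AE p in lborel. cmod (lambda_sym a b p) \<noteq> C"
proof -
  define Z where "Z = {p. p > 0 \<and> (ln p - a)^2 + b^2 * p^2 = C^2}"
  have "{p. cmod (lambda_sym a b p) = C} \<subseteq> {0} \<union> Z \<union> uminus ` Z"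
  proof
    fix p assume "p \<in> {p. cmod (lambda_sym a b p) = C}"
    then have C: "cmod (lambda_sym a b p) = C" by simp
    show "p \<in> {0} \<union> Z \<union> uminus ` Z"
    proof (cases "p = 0")
      case False
      have "(cmod (lambda_sym a b p))^2 = (ln \<bar>p\<bar> - a)^2 + b^2 * \<bar>p\<bar>^2"
        unfolding lambda_sym_def cmod_power2 using False by (simp add: ln_div power_mult_distrib)
      then have "\<bar>p\<bar> \<in> Z" unfolding Z_def using False C by auto
      then show ?thesis by (cases "p > 0") (auto intro!: image_eqI[of p uminus "-p"])
    qed simp
  qed
  moreover have "finite ({0} \<union> Z \<union> uminus ` Z)"
    unfolding Z_def using finite_level_set_log_quadratic by simp
  ultimately have "{p. cmod (lambda_sym a b p) = C} \<in> null_sets lborel"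
    using finite_subset finite_imp_null_set_lborel by blast
  then show ?thesis by (rule AE_not_in[THEN AE_mp]) (auto intro!: AE_I2)
qed

lemma L_eq_L2_bound_attained_imp_zero:
  assumes L: "L_eq a b w h" and C: "C \<ge> 0" and C_le: "\<And>p. p \<noteq> 0 \<Longrightarrow> C \<le> cmod (lambda_sym a b p)"
    and attained: "L2_norm_fun h \<le> C * L2_norm_fun w"
  shows "L2_norm_fun w = 0"
proof -
  obtain \<omega> \<eta> where \<omega>: "integrable lborel (\<lambda>p. (cmod (\<omega> p))^2)" and \<eta>: "integrable lborel (\<lambda>p. (cmod (\<eta> p))^2)"
    and w: "(LINT p|lborel. (cmod (\<omega> p))^2) = (LINT x|lborel. (w x)^2)"
    and h: "(LINT p|lborel. (cmod (\<eta> p))^2) = (LINT x|lborel. (h x)^2)"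
    and \<eta>\<omega>: "AE p in lborel. (cmod (\<eta> p))^2 = (cmod (lambda_sym a b p))^2 * (cmod (\<omega> p))^2"
    using L_eq_fourier[OF L] .
  define D where "D p = (cmod (\<eta> p))^2 - C^2 * (cmod (\<omega> p))^2" for p
  have D_int: "integrable lborel D" unfolding D_def using \<omega> \<eta> by simp
  have D_nonneg: "AE p in lborel. 0 \<le> D p"
    using \<eta>\<omega> AE_lborel_singleton[of 0]
    by eventually_elim (use C C_le in \<open>auto simp: D_def intro!: mult_right_mono power_mono\<close>)
  have "(L2_norm_fun h)^2 \<le> (C * L2_norm_fun w)^2"
    using attained L2_norm_fun_nonneg by (rule power_mono)
  then have "(LINT p|lborel. D p) \<le> 0"
    unfolding D_def using \<omega> \<eta> w h by (simp add: power_mult_distrib L2_norm_fun_sq)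
  then have "AE p in lborel. D p = 0"
    using integral_nonneg_eq_0_iff_AE[OF D_int D_nonneg] integral_nonneg_AE[OF D_nonneg] by simp
  then have "AE p in lborel. (cmod (\<omega> p))^2 = 0"
    using \<eta>\<omega> AE_lborel_singleton[of 0] lambda_sym_level_set_null[of a b C]
  proof eventually_elim
    fix p assume "D p = 0" and "(cmod (\<eta> p))^2 = (cmod (lambda_sym a b p))^2 * (cmod (\<omega> p))^2"
      and "p \<noteq> 0" and "cmod (lambda_sym a b p) \<noteq> C"
    then have "((cmod (lambda_sym a b p))^2 - C^2) * (cmod (\<omega> p))^2 = 0"
      and "C^2 < (cmod (lambda_sym a b p))^2"
      using C C_le[of p] by (auto simp: D_def algebra_simps intro!: power_strict_mono)
    then show "(cmod (\<omega> p))^2 = 0" by simp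
  qed
  then have "(LINT x|lborel. (w x)^2) = 0" unfolding w[symmetric] by (rule integral_eq_zero_AE)
  then show ?thesis unfolding L2_norm_fun_def by simp
qed

section \<open>Convolution with an integrable kernel\<close>

lemma integral_reflect_translate:
  fixes f :: "real \<Rightarrow> real"
  shows "(LINT y|lborel. f (x - y)) = (LINT y|lborel. f y)"
  using lborel_integral_real_affine[of "-1" f x] by simp

lemma integrable_reflect_translate:
  fixes f :: "real \<Rightarrow> real"
  shows "integrable lborel (\<lambda>y. f (x - y)) \<longleftrightarrow> integrable lborel f"
  using lborel_integrable_real_affine_iff[of "-1" f x] by simp

lemma nn_integral_translate:
  fixes f :: "real \<Rightarrow> ennreal"
  assumes "f \<in> borel_measurable borel"
  shows "(\<integral>\<^sup>+ x. f (x - y) \<partial>lborel) = (\<integral>\<^sup>+ x. f x \<partial>lborel)"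
  using nn_integral_real_affine[of f 1 "- y"] assms by simp

lemma conv_sq_le:
  fixes K G :: "real \<Rightarrow> real"
  assumes K: "integrable lborel K" and [measurable]: "G \<in> borel_measurable borel"
    and KG: "integrable lborel (\<lambda>y. \<bar>K (x - y)\<bar> * (G y)^2)"
  shows "integrable lborel (\<lambda>y. K (x - y) * G y)"
    and "(conv K G x)^2 \<le> (LINT y|lborel. \<bar>K y\<bar>) * (LINT y|lborel. \<bar>K (x - y)\<bar> * (G y)^2)"
proof -
  have [measurable]: "K \<in> borel_measurable borel" using K by (simp add: borel_measurable_integrable)
  \<comment> \<open>Cauchy-Schwarz for the factorisation \<open>|K| * G = sqrt |K| * (sqrt |K| * G)\<close>\<close>
  define f where "f y = sqrt \<bar>K (x - y)\<bar>" for y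
  define g where "g y = sqrt \<bar>K (x - y)\<bar> * G y" for y
  have [measurable]: "f \<in> borel_measurable borel" "g \<in> borel_measurable borel"
    unfolding f_def[abs_def] g_def[abs_def] by measurable
  have f2: "integrable lborel (\<lambda>y. (f y)^2)"
    unfolding f_def using integrable_reflect_translate[of "\<lambda>y. \<bar>K y\<bar>"] K by simp
  have g2: "integrable lborel (\<lambda>y. (g y)^2)" unfolding g_def using KG by (simp add: power_mult_distrib)
  have fg: "\<bar>K (x - y) * G y\<bar> = \<bar>f y * g y\<bar>" for y
    unfolding f_def g_def by (simp add: abs_mult real_sqrt_mult[symmetric])
  have "integrable lborel (\<lambda>y. f y * g y)" using f2 g2 by (intro square_integrable_mult) auto
  then show "integrable lborel (\<lambda>y. K (x - y) * G y)"
    by (rule Bochner_Integration.integrable_bound) (auto simp: fg)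
  have "\<bar>conv K G x\<bar> \<le> (LINT y|lborel. \<bar>f y * g y\<bar>)"
    unfolding conv_def fg[symmetric] by (rule integral_abs_bound)
  also have "\<dots> \<le> sqrt (LINT y|lborel. \<bar>K y\<bar>) * sqrt (LINT y|lborel. \<bar>K (x - y)\<bar> * (G y)^2)"
    using Cauchy_Schwarz_integral_abs[of f lborel g] f2 g2
    by (simp add: f_def g_def power_mult_distrib integral_reflect_translate[of "\<lambda>y. \<bar>K y\<bar>"])
  finally have "\<bar>conv K G x\<bar>^2 \<le> (sqrt (LINT y|lborel. \<bar>K y\<bar>) * sqrt (LINT y|lborel. \<bar>K (x - y)\<bar> * (G y)^2))^2"
    by (rule power_mono) simp
  then show "(conv K G x)^2 \<le> (LINT y|lborel. \<bar>K y\<bar>) * (LINT y|lborel. \<bar>K (x - y)\<bar> * (G y)^2)"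
    by (simp add: power_mult_distrib integral_nonneg_AE)
qed

lemma nn_integral_conv_weight:
  fixes K G :: "real \<Rightarrow> real"
  assumes K: "integrable lborel K" and G: "L2_fun G"
  shows "(\<integral>\<^sup>+ x. \<integral>\<^sup>+ y. ennreal (\<bar>K (x - y)\<bar> * (G y)^2) \<partial>lborel \<partial>lborel)
    = ennreal ((LINT x|lborel. \<bar>K x\<bar>) * (LINT y|lborel. (G y)^2))"
proof -
  have [measurable]: "K \<in> borel_measurable borel" using K by (simp add: borel_measurable_integrable)
  have [measurable]: "G \<in> borel_measurable borel" using G by (rule L2_fun_measurable)
  have K1: "(\<integral>\<^sup>+ x. ennreal \<bar>K x\<bar> \<partial>lborel) = ennreal (LINT x|lborel. \<bar>K x\<bar>)"
    using K by (intro nn_integral_eq_integral) auto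
  have "(\<integral>\<^sup>+ x. \<integral>\<^sup>+ y. ennreal (\<bar>K (x - y)\<bar> * (G y)^2) \<partial>lborel \<partial>lborel)
      = (\<integral>\<^sup>+ y. \<integral>\<^sup>+ x. ennreal ((G y)^2) * ennreal \<bar>K (x - y)\<bar> \<partial>lborel \<partial>lborel)"
    by (subst lborel_pair.Fubini') (auto simp: ennreal_mult' mult.commute)
  also have "\<dots> = (\<integral>\<^sup>+ y. ennreal ((G y)^2) * ennreal (LINT x|lborel. \<bar>K x\<bar>) \<partial>lborel)"
    by (simp add: nn_integral_cmult nn_integral_translate[of "\<lambda>x. ennreal \<bar>K x\<bar>"] K1)
  also have "\<dots> = ennreal (LINT y|lborel. (G y)^2) * ennreal (LINT x|lborel. \<bar>K x\<bar>)"
    using L2_fun_square_integrable[OF G] by (simp add: nn_integral_multc nn_integral_eq_integral)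
  finally show ?thesis by (simp add: ennreal_mult' mult.commute)
qed

lemma AE_integrable_conv_weight:
  assumes K: "integrable lborel K" and G: "L2_fun G"
  shows "AE x in lborel. integrable lborel (\<lambda>y. \<bar>K (x - y)\<bar> * (G y)^2)"
proof -
  have [measurable]: "K \<in> borel_measurable borel" using K by (simp add: borel_measurable_integrable)
  have [measurable]: "G \<in> borel_measurable borel" using G by (rule L2_fun_measurable)
  have "AE x in lborel. (\<integral>\<^sup>+ y. ennreal (\<bar>K (x - y)\<bar> * (G y)^2) \<partial>lborel) \<noteq> \<infinity>"
    using nn_integral_conv_weight[OF K G] by (intro nn_integral_PInf_AE) auto
  then show ?thesis
    by eventually_elim (auto intro!: integrableI_nonneg simp: top.not_eq_extremum)
qed

lemma nn_integral_conv_sq_le: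
  assumes K: "integrable lborel K" and G: "L2_fun G"
  shows "(\<integral>\<^sup>+ x. ennreal ((conv K G x)^2) \<partial>lborel) \<le> ennreal (((LINT x|lborel. \<bar>K x\<bar>) * L2_norm_fun G)^2)"
proof -
  have [measurable]: "K \<in> borel_measurable borel" using K by (simp add: borel_measurable_integrable)
  have [measurable]: "G \<in> borel_measurable borel" using G by (rule L2_fun_measurable)
  define k where "k = (LINT x|lborel. \<bar>K x\<bar>)"
  define P where "P x = (\<integral>\<^sup>+ y. ennreal (\<bar>K (x - y)\<bar> * (G y)^2) \<partial>lborel)" for x
  have k: "k \<ge> 0" unfolding k_def by simp
  have "(\<integral>\<^sup>+ x. ennreal ((conv K G x)^2) \<partial>lborel) \<le> (\<integral>\<^sup>+ x. ennreal k * P x \<partial>lborel)"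
  proof (rule nn_integral_mono_AE)
    show "AE x in lborel. ennreal ((conv K G x)^2) \<le> ennreal k * P x"
      using AE_integrable_conv_weight[OF K G]
    proof eventually_elim
      fix x assume int: "integrable lborel (\<lambda>y. \<bar>K (x - y)\<bar> * (G y)^2)"
      have "ennreal ((conv K G x)^2) \<le> ennreal (k * (LINT y|lborel. \<bar>K (x - y)\<bar> * (G y)^2))"
        using conv_sq_le(2)[OF K L2_fun_measurable[OF G] int] unfolding k_def by (rule ennreal_leI)
      also have "\<dots> = ennreal k * ennreal (LINT y|lborel. \<bar>K (x - y)\<bar> * (G y)^2)"
        using k by (intro ennreal_mult integral_nonneg_AE AE_I2) auto
      also have "ennreal (LINT y|lborel. \<bar>K (x - y)\<bar> * (G y)^2) = P x"
        unfolding P_def using int by (intro nn_integral_eq_integral[symmetric] AE_I2) auto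
      finally show "ennreal ((conv K G x)^2) \<le> ennreal k * P x" .
    qed
  qed
  also have "\<dots> = ennreal k * (\<integral>\<^sup>+ x. P x \<partial>lborel)"
    unfolding P_def by (rule nn_integral_cmult) measurable
  also have "\<dots> = ennreal k * ennreal (k * (L2_norm_fun G)^2)"
    unfolding P_def nn_integral_conv_weight[OF K G] k_def L2_norm_fun_sq ..
  also have "\<dots> = ennreal ((k * L2_norm_fun G)^2)"
    using k by (simp add: ennreal_mult[symmetric] power2_eq_square mult_ac)
  finally show ?thesis unfolding k_def .
qed

theorem Young_convolution_L1_L2:
  assumes K: "integrable lborel K" and G: "L2_fun G"
  shows "L2_fun (conv K G)" and "L2_norm_fun (conv K G) \<le> (LINT x|lborel. \<bar>K x\<bar>) * L2_norm_fun G"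
proof -
  have [measurable]: "K \<in> borel_measurable borel" using K by (simp add: borel_measurable_integrable)
  have [measurable]: "G \<in> borel_measurable borel" using G by (rule L2_fun_measurable)
  note le = nn_integral_conv_sq_le[OF K G]
  have conv2: "integrable lborel (\<lambda>x. (conv K G x)^2)"
  proof (rule integrableI_nonneg)
    show "(\<integral>\<^sup>+ x. ennreal ((conv K G x)^2) \<partial>lborel) < \<infinity>"
      using le by (rule le_less_trans) simp
  qed (auto simp: conv_def[abs_def])
  then show "L2_fun (conv K G)" unfolding L2_fun_def conv_def[abs_def] by simp
  have "ennreal ((L2_norm_fun (conv K G))^2) \<le> ennreal (((LINT x|lborel. \<bar>K x\<bar>) * L2_norm_fun G)^2)"
    using le unfolding nn_integral_eq_integral[OF conv2 AE_I2[OF zero_le_power2]] L2_norm_fun_sq .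
  then have "(L2_norm_fun (conv K G))^2 \<le> ((LINT x|lborel. \<bar>K x\<bar>) * L2_norm_fun G)^2"
    by (rule ennreal_le_iff[THEN iffD1, rotated]) simp
  then show "L2_norm_fun (conv K G) \<le> (LINT x|lborel. \<bar>K x\<bar>) * L2_norm_fun G"
    by (rule power2_le_imp_le) (simp add: L2_norm_fun_nonneg)
qed

lemma conv_diff:
  assumes K: "integrable lborel K" and G1: "L2_fun G1" and G2: "L2_fun G2"
  shows "AE x in lborel. conv K G1 x - conv K G2 x = conv K (\<lambda>y. G1 y - G2 y) x"
  using AE_integrable_conv_weight[OF K G1] AE_integrable_conv_weight[OF K G2]
proof eventually_elim
  fix x assume "integrable lborel (\<lambda>y. \<bar>K (x - y)\<bar> * (G1 y)^2)" "integrable lborel (\<lambda>y. \<bar>K (x - y)\<bar> * (G2 y)^2)"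
  then have "integrable lborel (\<lambda>y. K (x - y) * G1 y)" "integrable lborel (\<lambda>y. K (x - y) * G2 y)"
    using conv_sq_le(1)[OF K L2_fun_measurable[OF G1]] conv_sq_le(1)[OF K L2_fun_measurable[OF G2]] by auto
  then show "conv K G1 x - conv K G2 x = conv K (\<lambda>y. G1 y - G2 y) x"
    unfolding conv_def by (simp add: right_diff_distrib)
qed

section \<open>Nonlinearities with bounded gradient\<close>

lemma grad_has_derivative:
  fixes g :: "real^'n \<Rightarrow> real"
  assumes "g differentiable (at z)"
  shows "(g has_derivative (\<lambda>h. h \<bullet> grad g z)) (at z)"
proof -
  obtain D where D: "(g has_derivative D) (at z)" using assms unfolding differentiable_def by blast
  have "D = (\<lambda>h. h \<bullet> adjoint D 1)"
    using adjoint_works[OF has_derivative_linear[OF D], of _ 1] by (simp add: fun_eq_iff)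
  with D have "(g has_derivative (\<lambda>h. h \<bullet> adjoint D 1)) (at z)" by simp
  then show ?thesis unfolding grad_def by (rule someI)
qed

lemma norm_le_sup_norm: "bdd_above (range (\<lambda>z. norm (G z))) \<Longrightarrow> norm (G z) \<le> sup_norm G"
  unfolding sup_norm_def by (rule cSup_upper) auto

lemma sup_norm_nonneg: "bdd_above (range (\<lambda>z. norm (G z))) \<Longrightarrow> 0 \<le> sup_norm G"
  using norm_le_sup_norm[of G 0] by (meson norm_ge_zero order_trans)

lemma bdd_above_norm_diff:
  assumes "bdd_above (range (\<lambda>z. norm (G1 z)))" "bdd_above (range (\<lambda>z. norm (G2 z)))"
  shows "bdd_above (range (\<lambda>z. norm (G1 z - G2 z)))"
proof -
  obtain B1 B2 where "\<And>z. norm (G1 z) \<le> B1" "\<And>z. norm (G2 z) \<le> B2"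
    using assms unfolding bdd_above_def by auto
  then have "norm (G1 z - G2 z) \<le> B1 + B2" for z
    by (meson add_mono norm_triangle_ineq4 order_trans)
  then show ?thesis by (auto simp: bdd_above_def intro!: exI[of _ "B1 + B2"])
qed

lemma Lipschitz_sup_norm_gradient:
  fixes f :: "real^'n \<Rightarrow> real"
  assumes "\<And>z. (f has_derivative (\<lambda>h. h \<bullet> G z)) (at z)" and "bdd_above (range (\<lambda>z. norm (G z)))"
  shows "\<bar>f x - f y\<bar> \<le> sup_norm G * norm (x - y)"
proof -
  have "onorm (\<lambda>h. h \<bullet> G z) \<le> sup_norm G" for z
  proof -
    have "onorm (\<lambda>h. h \<bullet> G z) \<le> norm (G z)"
      by (rule onorm_le) (simp add: Cauchy_Schwarz_ineq2 mult.commute)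
    also have "\<dots> \<le> sup_norm G" using assms(2) by (rule norm_le_sup_norm)
    finally show ?thesis .
  qed
  then show ?thesis
    using differentiable_bound[of UNIV f "\<lambda>z h. h \<bullet> G z" "sup_norm G" x y] assms(1) by simp
qed

definition admissible_nonlinearity :: "(real^'n \<Rightarrow> real) \<Rightarrow> bool" where
  "admissible_nonlinearity g \<longleftrightarrow>
     (\<forall>z. g differentiable (at z)) \<and> g 0 = 0 \<and> bdd_above (range (\<lambda>z. norm (grad g z)))"

lemma admissible_nonlinearity_measurable:
  "admissible_nonlinearity g \<Longrightarrow> g \<in> borel_measurable borel"
  unfolding admissible_nonlinearity_def
  by (intro borel_measurable_continuous_onI continuous_at_imp_continuous_on ballI
      differentiable_imp_continuous_within) auto

lemma admissible_nonlinearity_sup_norm_nonneg: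
  assumes "admissible_nonlinearity g1" "admissible_nonlinearity g2"
  shows "0 \<le> sup_norm (grad g1)" and "0 \<le> sup_norm (\<lambda>z. grad g1 z - grad g2 z)"
  using assms unfolding admissible_nonlinearity_def
  by (auto intro: sup_norm_nonneg bdd_above_norm_diff)

lemma admissible_nonlinearity_Lipschitz:
  assumes "admissible_nonlinearity g"
  shows "\<bar>g x - g y\<bar> \<le> sup_norm (grad g) * norm (x - y)"
  using assms unfolding admissible_nonlinearity_def
  by (intro Lipschitz_sup_norm_gradient grad_has_derivative) auto

lemma admissible_nonlinearity_diff_le:
  assumes g1: "admissible_nonlinearity g1" and g2: "admissible_nonlinearity g2"
  shows "\<bar>g1 x - g2 x\<bar> \<le> sup_norm (\<lambda>z. grad g1 z - grad g2 z) * norm x"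
proof -
  have "((\<lambda>z. g1 z - g2 z) has_derivative (\<lambda>h. h \<bullet> (grad g1 z - grad g2 z))) (at z)" for z
  proof -
    have "(g1 has_derivative (\<lambda>h. h \<bullet> grad g1 z)) (at z)" "(g2 has_derivative (\<lambda>h. h \<bullet> grad g2 z)) (at z)"
      using g1 g2 by (auto simp: admissible_nonlinearity_def intro: grad_has_derivative)
    from has_derivative_diff[OF this] show ?thesis by (simp add: inner_diff_right)
  qed
  from Lipschitz_sup_norm_gradient[OF this, of x 0] show ?thesis
    using g1 g2 by (simp add: admissible_nonlinearity_def bdd_above_norm_diff)
qed

lemma norm_vec_sq: "(norm (x :: real^'n))^2 = (\<Sum>m\<in>UNIV. (x $ m)^2)"
  by (simp add: norm_vec_def L2_set_def sum_nonneg)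

lemma L2_vecD:
  assumes "L2_vec u"
  shows L2_vec_measurable: "u \<in> borel_measurable borel"
    and L2_vec_norm: "L2_fun (\<lambda>x. norm (u x))" "L2_norm_fun (\<lambda>x. norm (u x)) = L2_norm_vec u"
  using assms unfolding L2_vec_def L2_fun_def L2_norm_fun_def L2_norm_vec_def by auto

lemma L2_vec_component:
  assumes "L2_vec u"
  shows "L2_fun (\<lambda>x. u x $ m)"
proof (rule L2_fun_dominated(1)[OF L2_vec_norm(1)[OF assms], where c=1])
  show "(\<lambda>x. u x $ m) \<in> borel_measurable lborel"
    using measurable_compose[OF L2_vec_measurable[OF assms] borel_measurable_nth] by simp
qed (auto simp: component_le_norm_cart)

lemma L2_norm_vec_nonneg: "L2_norm_vec u \<ge> 0"
  unfolding L2_norm_vec_def by (simp add: integral_nonneg_AE)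

lemma L2_norm_vec_eq_components:
  assumes "L2_vec u"
  shows "L2_norm_vec u = sqrt (\<Sum>m\<in>UNIV. (L2_norm_fun (\<lambda>x. u x $ m))^2)"
proof -
  have "(LINT x|lborel. (norm (u x))^2) = (\<Sum>m\<in>UNIV. (LINT x|lborel. (u x $ m)^2))"
    unfolding norm_vec_sq using L2_vec_component[OF assms]
    by (intro Bochner_Integration.integral_sum) (auto simp: L2_fun_def)
  then show ?thesis unfolding L2_norm_vec_def L2_norm_fun_sq by simp
qed

lemma L2_fun_dominated_vec:
  assumes w: "L2_vec w" and F: "F \<in> borel_measurable borel" and le: "\<And>y. \<bar>F y\<bar> \<le> c * norm (w y)"
    and c: "c \<ge> 0"
  shows "L2_fun F" and "L2_norm_fun F \<le> c * L2_norm_vec w"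
  using L2_fun_dominated[OF L2_vec_norm(1)[OF w], of F c] L2_vec_norm(2)[OF w] F le c by auto

lemma L2_vec_add_diff:
  assumes u: "L2_vec u" and v: "L2_vec v"
  shows "L2_vec (\<lambda>x. u x + v x)" "L2_norm_vec (\<lambda>x. u x + v x) \<le> L2_norm_vec u + L2_norm_vec v"
    and "L2_vec (\<lambda>x. u x - v x)" "L2_norm_vec (\<lambda>x. u x - v x) \<le> L2_norm_vec u + L2_norm_vec v"
proof -
  note uv = L2_fun_add[OF L2_vec_norm(1)[OF u] L2_vec_norm(1)[OF v]]
  have bound: "L2_vec w \<and> L2_norm_vec w \<le> L2_norm_vec u + L2_norm_vec v"
    if [measurable]: "w \<in> borel_measurable borel" and le: "\<And>x. norm (w x) \<le> norm (u x) + norm (v x)" for w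
  proof -
    have w: "L2_fun (\<lambda>x. norm (w x))"
      and "L2_norm_fun (\<lambda>x. norm (w x)) \<le> 1 * L2_norm_fun (\<lambda>x. norm (u x) + norm (v x))"
      using L2_fun_dominated[OF uv, of "\<lambda>x. norm (w x)" 1] le by auto
    moreover have "L2_norm_fun (\<lambda>x. norm (u x) + norm (v x)) \<le> L2_norm_vec u + L2_norm_vec v"
      using L2_norm_fun_triangle[OF L2_vec_norm(1)[OF u] L2_vec_norm(1)[OF v]] L2_vec_norm(2)[OF u]
        L2_vec_norm(2)[OF v] by simp
    moreover have "L2_norm_vec w = L2_norm_fun (\<lambda>x. norm (w x))"
      unfolding L2_norm_vec_def L2_norm_fun_def ..
    moreover have "L2_vec w" using w unfolding L2_vec_def L2_fun_def by simp
    ultimately show ?thesis by simp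
  qed
  have [measurable]: "u \<in> borel_measurable borel" "v \<in> borel_measurable borel"
    using u v by (auto dest: L2_vec_measurable)
  show "L2_vec (\<lambda>x. u x + v x)" "L2_norm_vec (\<lambda>x. u x + v x) \<le> L2_norm_vec u + L2_norm_vec v"
    using bound[of "\<lambda>x. u x + v x"] norm_triangle_ineq by auto
  show "L2_vec (\<lambda>x. u x - v x)" "L2_norm_vec (\<lambda>x. u x - v x) \<le> L2_norm_vec u + L2_norm_vec v"
    using bound[of "\<lambda>x. u x - v x"] norm_triangle_ineq4 by auto
qed

lemma L2_fun_superposition:
  assumes g: "admissible_nonlinearity g" and u: "L2_vec u"
  shows "L2_fun (\<lambda>y. g (u y))"
proof -
  have [measurable]: "g \<in> borel_measurable borel" "u \<in> borel_measurable borel"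
    using g u by (auto dest: admissible_nonlinearity_measurable L2_vec_measurable)
  show ?thesis
    using admissible_nonlinearity_Lipschitz[OF g, of "u _" 0] g
      admissible_nonlinearity_sup_norm_nonneg(1)[OF g g]
    by (intro L2_fun_dominated_vec(1)[OF u]) (auto simp: admissible_nonlinearity_def)
qed

lemma L2_norm_superposition_le:
  assumes g: "admissible_nonlinearity g" and u: "L2_vec u"
  shows "L2_norm_fun (\<lambda>y. g (u y)) \<le> sup_norm (grad g) * L2_norm_vec u"
proof -
  have [measurable]: "g \<in> borel_measurable borel" "u \<in> borel_measurable borel"
    using g u by (auto dest: admissible_nonlinearity_measurable L2_vec_measurable)
  show ?thesis
    using admissible_nonlinearity_Lipschitz[OF g, of "u _" 0] g
      admissible_nonlinearity_sup_norm_nonneg(1)[OF g g]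
    by (intro L2_fun_dominated_vec(2)[OF u]) (auto simp: admissible_nonlinearity_def)
qed

lemma L2_norm_superposition_diff_le:
  assumes g1: "admissible_nonlinearity g1" and g2: "admissible_nonlinearity g2"
    and u1: "L2_vec u1" and u2: "L2_vec u2"
  shows "L2_norm_fun (\<lambda>y. g1 (u1 y) - g2 (u2 y))
    \<le> sup_norm (grad g1) * L2_norm_vec (\<lambda>y. u1 y - u2 y)
      + sup_norm (\<lambda>z. grad g1 z - grad g2 z) * L2_norm_vec u2"
proof -
  have [measurable]: "g1 \<in> borel_measurable borel" "g2 \<in> borel_measurable borel"
    "u1 \<in> borel_measurable borel" "u2 \<in> borel_measurable borel"
    using g1 g2 u1 u2 by (auto dest: admissible_nonlinearity_measurable L2_vec_measurable)
  note nonneg = admissible_nonlinearity_sup_norm_nonneg[OF g1 g2]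
  have f1: "L2_fun (\<lambda>y. g1 (u1 y) - g1 (u2 y))"
    and le1: "L2_norm_fun (\<lambda>y. g1 (u1 y) - g1 (u2 y)) \<le> sup_norm (grad g1) * L2_norm_vec (\<lambda>y. u1 y - u2 y)"
    using L2_fun_dominated_vec[OF L2_vec_add_diff(3)[OF u1 u2], of "\<lambda>y. g1 (u1 y) - g1 (u2 y)"]
      admissible_nonlinearity_Lipschitz[OF g1] nonneg by auto
  have f2: "L2_fun (\<lambda>y. g1 (u2 y) - g2 (u2 y))"
    and le2: "L2_norm_fun (\<lambda>y. g1 (u2 y) - g2 (u2 y)) \<le> sup_norm (\<lambda>z. grad g1 z - grad g2 z) * L2_norm_vec u2"
    using L2_fun_dominated_vec[OF u2, of "\<lambda>y. g1 (u2 y) - g2 (u2 y)"]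
      admissible_nonlinearity_diff_le[OF g1 g2] nonneg by auto
  have "L2_norm_fun (\<lambda>y. (g1 (u1 y) - g1 (u2 y)) + (g1 (u2 y) - g2 (u2 y)))
      \<le> L2_norm_fun (\<lambda>y. g1 (u1 y) - g1 (u2 y)) + L2_norm_fun (\<lambda>y. g1 (u2 y) - g2 (u2 y))"
    by (rule L2_norm_fun_triangle[OF f1 f2])
  with le1 le2 show ?thesis by simp
qed

section \<open>The fixed-point estimate\<close>

lemma sqrt_sum_squares_le_weighted_sum:
  fixes y k X :: "'a \<Rightarrow> real"
  assumes A: "finite A" and y: "\<And>m. m \<in> A \<Longrightarrow> 0 \<le> y m" "\<And>m. m \<in> A \<Longrightarrow> y m \<le> k m * X m"
    and X: "\<And>m. m \<in> A \<Longrightarrow> 0 \<le> X m"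
  shows "sqrt (\<Sum>m\<in>A. (y m)^2) \<le> sqrt (\<Sum>m\<in>A. (k m)^2) * (\<Sum>m\<in>A. X m)"
proof -
  have "(y m)^2 \<le> (k m)^2 * (\<Sum>m\<in>A. X m)^2" if m: "m \<in> A" for m
  proof -
    have "(y m)^2 \<le> (k m)^2 * (X m)^2"
      using power_mono[OF y(2) y(1)] m by (simp add: power_mult_distrib)
    also have "\<dots> \<le> (k m)^2 * (\<Sum>m\<in>A. X m)^2"
      using X m A by (intro mult_left_mono power_mono member_le_sum) auto
    finally show ?thesis .
  qed
  then have "(\<Sum>m\<in>A. (y m)^2) \<le> (\<Sum>m\<in>A. (k m)^2) * (\<Sum>m\<in>A. X m)^2"
    by (simp add: sum_distrib_right sum_mono)
  then have "sqrt (\<Sum>m\<in>A. (y m)^2) \<le> sqrt ((\<Sum>m\<in>A. (k m)^2) * (\<Sum>m\<in>A. X m)^2)" by simp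
  also have "\<dots> = sqrt (\<Sum>m\<in>A. (k m)^2) * (\<Sum>m\<in>A. X m)"
    using X by (simp add: real_sqrt_mult sum_nonneg)
  finally show ?thesis .
qed

lemma L2_norm_fun_cong_AE:
  assumes [measurable]: "f \<in> borel_measurable borel" "g \<in> borel_measurable borel"
    and "AE x in lborel. f x = g x"
  shows "L2_norm_fun f = L2_norm_fun g"
proof -
  have "AE x in lborel. (f x)^2 = (g x)^2" using assms(3) by eventually_elim simp
  then have "(LINT x|lborel. (f x)^2) = (LINT x|lborel. (g x)^2)"
    by (rule integral_cong_AE[rotated 2]) measurable
  then show ?thesis unfolding L2_norm_fun_def by simp
qed

lemma L_eq_conv_diff_bound:
  assumes C: "C \<ge> 0" and C_le: "\<And>p. p \<noteq> 0 \<Longrightarrow> C \<le> cmod (lambda_sym a b p)"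
    and K: "integrable lborel K" and G1: "L2_fun G1" and G2: "L2_fun G2"
    and w1: "L_eq a b w1 (\<lambda>x. e * conv K G1 x)" and w2: "L_eq a b w2 (\<lambda>x. e * conv K G2 x)"
  shows "C * L2_norm_fun (\<lambda>x. w1 x - w2 x) \<le> \<bar>e\<bar> * (LINT x|lborel. \<bar>K x\<bar>) * L2_norm_fun (\<lambda>y. G1 y - G2 y)"
proof -
  have G: "L2_fun (\<lambda>y. G1 y - G2 y)" using G1 G2 by (rule L2_fun_diff)
  have [measurable]: "conv K G1 \<in> borel_measurable borel" "conv K G2 \<in> borel_measurable borel"
    "conv K (\<lambda>y. G1 y - G2 y) \<in> borel_measurable borel"
    using K G1 G2 G by (auto intro: L2_fun_measurable Young_convolution_L1_L2(1))
  have "C * L2_norm_fun (\<lambda>x. w1 x - w2 x) \<le> L2_norm_fun (\<lambda>x. e * conv K G1 x - e * conv K G2 x)"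
    using L_eq_L2_bound[OF L_eq_diff[OF w1 w2] C C_le] .
  also have "\<dots> = L2_norm_fun (\<lambda>x. e * conv K (\<lambda>y. G1 y - G2 y) x)"
  proof (rule L2_norm_fun_cong_AE)
    show "AE x in lborel. e * conv K G1 x - e * conv K G2 x = e * conv K (\<lambda>y. G1 y - G2 y) x"
      using conv_diff[OF K G1 G2] by eventually_elim (simp add: right_diff_distrib[symmetric])
  qed (measurable, measurable)
  also have "\<dots> = \<bar>e\<bar> * L2_norm_fun (conv K (\<lambda>y. G1 y - G2 y))"
    by (rule L2_norm_fun_cmult)
  also have "\<dots> \<le> \<bar>e\<bar> * ((LINT x|lborel. \<bar>K x\<bar>) * L2_norm_fun (\<lambda>y. G1 y - G2 y))"
    using Young_convolution_L1_L2(2)[OF K G] by (intro mult_left_mono) auto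
  finally show ?thesis by (simp add: mult.assoc)
qed

lemma eq_of_sqrt_sum_squares_le:
  fixes x y :: "'a \<Rightarrow> real"
  assumes A: "finite A" and x: "\<And>m. m \<in> A \<Longrightarrow> 0 \<le> x m" and xy: "\<And>m. m \<in> A \<Longrightarrow> x m \<le> y m"
    and le: "sqrt (\<Sum>m\<in>A. (y m)^2) \<le> sqrt (\<Sum>m\<in>A. (x m)^2)" and m: "m \<in> A"
  shows "x m = y m"
proof -
  have sq: "(x m)^2 \<le> (y m)^2" if "m \<in> A" for m using x xy that by (intro power_mono) auto
  have "(\<Sum>m\<in>A. (x m)^2) \<le> (\<Sum>m\<in>A. (y m)^2)" using sq by (rule sum_mono)
  moreover have "(\<Sum>m\<in>A. (y m)^2) \<le> (\<Sum>m\<in>A. (x m)^2)" using le by simp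
  ultimately have "(\<Sum>m\<in>A. (x m)^2) = (\<Sum>m\<in>A. (y m)^2)" by (rule antisym)
  from sum_mono_inv[OF this sq m A] show ?thesis
    using x[OF m] xy[OF m] by (simp add: power2_eq_iff_nonneg)
qed

lemma absorb_linear_self_bound:
  fixes C d \<epsilon> \<kappa> M R :: real
  assumes C: "C > 0" and le: "C * d \<le> \<epsilon> * \<kappa> * (M * d + R)" and \<sigma>: "\<epsilon> * M * \<kappa> / C < 1"
  shows "d \<le> \<epsilon> / (1 - \<epsilon> * M * \<kappa> / C) * (\<kappa> / C) * R"
proof -
  have pos: "C - \<epsilon> * M * \<kappa> > 0" using C \<sigma> by (simp add: field_simps)
  have "d * (C - \<epsilon> * M * \<kappa>) \<le> \<epsilon> * \<kappa> * R" using le by (simp add: algebra_simps)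
  then have "d \<le> \<epsilon> * \<kappa> * R / (C - \<epsilon> * M * \<kappa>)" using pos by (simp add: pos_le_divide_eq)
  also have "\<dots> = \<epsilon> / (1 - \<epsilon> * M * \<kappa> / C) * (\<kappa> / C) * R" using C pos by (simp add: field_simps)
  finally show ?thesis .
qed

locale log_laplacian_system =
  fixes a b :: "'n::finite \<Rightarrow> real" and C :: real and K :: "'n \<Rightarrow> real \<Rightarrow> real"
    and eps :: "'n \<Rightarrow> real" and u0 :: "real \<Rightarrow> real^'n"
  assumes C_pos: "C > 0"
    and C_le_lambda_sym: "\<And>m p. p \<noteq> 0 \<Longrightarrow> C \<le> cmod (lambda_sym (a m) (b m) p)"
    and K_integrable: "\<And>m. integrable lborel (K m)"
    and u0_L2: "L2_vec u0"
begin

definition kernel_norm :: real where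
  "kernel_norm = sqrt (\<Sum>m\<in>UNIV. (LINT x|lborel. \<bar>K m x\<bar>)^2)"

definition source :: "('n \<Rightarrow> real^'n \<Rightarrow> real) \<Rightarrow> (real \<Rightarrow> real^'n) \<Rightarrow> 'n \<Rightarrow> real \<Rightarrow> real" where
  "source g v m = (\<lambda>x. eps m * conv (K m) (\<lambda>y. g m (u0 y + v y)) x)"

definition fixed_point :: "('n \<Rightarrow> real^'n \<Rightarrow> real) \<Rightarrow> (real \<Rightarrow> real^'n) \<Rightarrow> bool" where
  "fixed_point g v \<longleftrightarrow> L2_vec v \<and> (\<forall>m. L_eq (a m) (b m) (\<lambda>x. v x $ m) (source g v m))"

lemma kernel_norm_nonneg: "0 \<le> kernel_norm"
  unfolding kernel_norm_def by (simp add: sum_nonneg)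

lemma C_mult_L2_norm_vec_eq:
  assumes "L2_vec v"
  shows "C * L2_norm_vec v = sqrt (\<Sum>m\<in>UNIV. (C * L2_norm_fun (\<lambda>x. v x $ m))^2)"
  unfolding L2_norm_vec_eq_components[OF assms] power_mult_distrib sum_distrib_left[symmetric]
  using C_pos by (simp add: real_sqrt_mult)

lemma L2_norm_source_le:
  assumes g: "admissible_nonlinearity (g m)" and v: "L2_vec v"
  shows "L2_norm_fun (source g v m)
    \<le> (LINT x|lborel. \<bar>K m x\<bar>) * (\<bar>eps m\<bar> * sup_norm (grad (g m)) * L2_norm_vec (\<lambda>x. u0 x + v x))"
proof -
  have u: "L2_vec (\<lambda>x. u0 x + v x)" using u0_L2 v by (rule L2_vec_add_diff(1))
  have "L2_norm_fun (source g v m) = \<bar>eps m\<bar> * L2_norm_fun (conv (K m) (\<lambda>y. g m (u0 y + v y)))"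
    unfolding source_def by (rule L2_norm_fun_cmult)
  also have "\<dots> \<le> \<bar>eps m\<bar> * ((LINT x|lborel. \<bar>K m x\<bar>) * L2_norm_fun (\<lambda>y. g m (u0 y + v y)))"
    using Young_convolution_L1_L2(2)[OF K_integrable L2_fun_superposition[OF g u]] by (rule mult_left_mono) simp
  also have "\<dots> \<le> \<bar>eps m\<bar> * ((LINT x|lborel. \<bar>K m x\<bar>) * (sup_norm (grad (g m)) * L2_norm_vec (\<lambda>x. u0 x + v x)))"
    using L2_norm_superposition_le[OF g u] by (intro mult_left_mono) auto
  finally show ?thesis by (simp add: mult_ac)
qed

lemma fixed_points_diff_bound:
  assumes g1: "\<And>m. admissible_nonlinearity (g1 m)" and g2: "\<And>m. admissible_nonlinearity (g2 m)"
    and v1: "fixed_point g1 v1" and v2: "fixed_point g2 v2"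
    and eps: "\<And>m. \<bar>eps m\<bar> \<le> \<epsilon>" and M: "(\<Sum>m\<in>UNIV. sup_norm (grad (g1 m))) \<le> M"
  shows "C * L2_norm_vec (\<lambda>x. v1 x - v2 x)
    \<le> \<epsilon> * kernel_norm * (M * L2_norm_vec (\<lambda>x. v1 x - v2 x)
        + L2_norm_vec (\<lambda>x. u0 x + v2 x) * (\<Sum>m\<in>UNIV. sup_norm (\<lambda>z. grad (g1 m) z - grad (g2 m) z)))"
proof -
  define d where "d = L2_norm_vec (\<lambda>x. v1 x - v2 x)"
  define W where "W = L2_norm_vec (\<lambda>x. u0 x + v2 x)"
  define L where "L m = sup_norm (grad (g1 m))" for m
  define D where "D m = sup_norm (\<lambda>z. grad (g1 m) z - grad (g2 m) z)" for m
  define X where "X m = \<epsilon> * (L m * d + D m * W)" for m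
  have v1L2: "L2_vec v1" and v2L2: "L2_vec v2" using v1 v2 unfolding fixed_point_def by auto
  have a1: "L2_vec (\<lambda>x. u0 x + v1 x)" and a2: "L2_vec (\<lambda>x. u0 x + v2 x)"
    using u0_L2 v1L2 v2L2 by (auto intro: L2_vec_add_diff(1))
  have \<epsilon>: "0 \<le> \<epsilon>" using eps[of undefined] by linarith
  have X: "0 \<le> X m" for m
    unfolding X_def L_def D_def d_def W_def using \<epsilon> admissible_nonlinearity_sup_norm_nonneg[OF g1 g2]
    by (simp add: L2_norm_vec_nonneg)
  have "C * L2_norm_fun (\<lambda>x. v1 x $ m - v2 x $ m) \<le> (LINT x|lborel. \<bar>K m x\<bar>) * X m" for m
  proof -
    have "C * L2_norm_fun (\<lambda>x. v1 x $ m - v2 x $ m)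
        \<le> \<bar>eps m\<bar> * (LINT x|lborel. \<bar>K m x\<bar>) * L2_norm_fun (\<lambda>y. g1 m (u0 y + v1 y) - g2 m (u0 y + v2 y))"
      using v1 v2 C_pos unfolding fixed_point_def source_def
      by (intro L_eq_conv_diff_bound K_integrable L2_fun_superposition g1 g2 a1 a2)
         (auto intro: C_le_lambda_sym)
    also have "\<dots> \<le> \<epsilon> * (LINT x|lborel. \<bar>K m x\<bar>) * (L m * d + D m * W)"
      using L2_norm_superposition_diff_le[OF g1 g2 a1 a2] eps[of m]
      by (intro mult_mono) (simp_all add: L_def D_def d_def W_def L2_norm_fun_nonneg)
    finally show ?thesis unfolding X_def by (simp add: mult_ac)
  qed
  then have "C * d \<le> kernel_norm * (\<Sum>m\<in>UNIV. X m)"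
    unfolding d_def C_mult_L2_norm_vec_eq[OF L2_vec_add_diff(3)[OF v1L2 v2L2]] kernel_norm_def
    using X C_pos by (intro sqrt_sum_squares_le_weighted_sum) (auto simp: L2_norm_fun_nonneg)
  moreover have "(\<Sum>m\<in>UNIV. X m) = \<epsilon> * (d * (\<Sum>m\<in>UNIV. L m) + W * (\<Sum>m\<in>UNIV. D m))"
    unfolding X_def by (simp add: sum_distrib_left[symmetric] sum.distrib mult.commute)
  moreover have "\<dots> \<le> \<epsilon> * (M * d + W * (\<Sum>m\<in>UNIV. D m))"
    using mult_left_mono[OF M, of d] \<epsilon> unfolding L_def d_def
    by (intro mult_left_mono) (auto simp: L2_norm_vec_nonneg mult.commute)
  ultimately have "C * d \<le> kernel_norm * (\<epsilon> * (M * d + W * (\<Sum>m\<in>UNIV. D m)))"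
    using kernel_norm_nonneg by (metis mult_left_mono order_trans)
  then show ?thesis unfolding d_def W_def D_def by (simp add: mult_ac)
qed

text \<open>The borderline case \<open>\<sigma> = 1\<close>, in which the contraction estimate says nothing.\<close>

lemma fixed_point_eq_0:
  assumes g: "\<And>m. admissible_nonlinearity (g m)" and v: "fixed_point g v"
    and u0: "L2_norm_vec u0 = 0" and eps: "\<And>m. \<bar>eps m\<bar> \<le> \<epsilon>"
    and M: "(\<Sum>m\<in>UNIV. sup_norm (grad (g m))) \<le> M" and small: "\<epsilon> * M * kernel_norm \<le> C"
  shows "L2_norm_vec v = 0"
proof -
  define L where "L m = sup_norm (grad (g m))" for m
  have vL2: "L2_vec v" and eq: "L_eq (a m) (b m) (\<lambda>x. v x $ m) (source g v m)" for m
    using v unfolding fixed_point_def by auto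
  have u0v: "L2_norm_vec (\<lambda>x. u0 x + v x) \<le> L2_norm_vec v"
    using L2_vec_add_diff(2)[OF u0_L2 vL2] u0 by simp
  have \<epsilon>: "0 \<le> \<epsilon>" using eps[of undefined] by linarith
  have L: "0 \<le> L m" for m unfolding L_def using admissible_nonlinearity_sup_norm_nonneg[OF g g] by auto
  have lower: "C * L2_norm_fun (\<lambda>x. v x $ m) \<le> L2_norm_fun (source g v m)" for m
    using C_pos by (intro L_eq_L2_bound[OF eq] C_le_lambda_sym) auto
  have upper: "L2_norm_fun (source g v m) \<le> (LINT x|lborel. \<bar>K m x\<bar>) * (\<epsilon> * L m * L2_norm_vec v)" for m
  proof -
    have "\<bar>eps m\<bar> * L m * L2_norm_vec (\<lambda>x. u0 x + v x) \<le> \<epsilon> * L m * L2_norm_vec v"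
      using eps[of m] L[of m] u0v \<epsilon> by (intro mult_mono) (auto simp: L2_norm_vec_nonneg)
    from mult_left_mono[OF this, of "LINT x|lborel. \<bar>K m x\<bar>"] L2_norm_source_le[of g m v, OF g vL2]
    show ?thesis unfolding L_def by simp
  qed
  have "sqrt (\<Sum>m\<in>UNIV. (L2_norm_fun (source g v m))^2) \<le> kernel_norm * (\<Sum>m\<in>UNIV. \<epsilon> * L m * L2_norm_vec v)"
    unfolding kernel_norm_def using upper \<epsilon> L
    by (intro sqrt_sum_squares_le_weighted_sum) (auto simp: L2_norm_fun_nonneg L2_norm_vec_nonneg)
  also have "\<dots> = (\<epsilon> * (\<Sum>m\<in>UNIV. L m) * kernel_norm) * L2_norm_vec v"
    by (simp add: sum_distrib_left[symmetric] sum_distrib_right[symmetric] mult_ac)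
  also have "\<dots> \<le> C * L2_norm_vec v"
  proof (rule mult_right_mono[OF _ L2_norm_vec_nonneg])
    have "\<epsilon> * (\<Sum>m\<in>UNIV. L m) * kernel_norm \<le> \<epsilon> * M * kernel_norm"
      using M \<epsilon> kernel_norm_nonneg unfolding L_def by (intro mult_right_mono mult_left_mono) auto
    with small show "\<epsilon> * (\<Sum>m\<in>UNIV. L m) * kernel_norm \<le> C" by linarith
  qed
  finally have "L2_norm_fun (source g v m) = C * L2_norm_fun (\<lambda>x. v x $ m)" for m
    unfolding C_mult_L2_norm_vec_eq[OF vL2]
    using C_pos lower by (intro eq_of_sqrt_sum_squares_le[symmetric]) (auto simp: L2_norm_fun_nonneg)
  then have "L2_norm_fun (\<lambda>x. v x $ m) = 0" for m
    using C_pos C_le_lambda_sym by (intro L_eq_L2_bound_attained_imp_zero[OF eq, of C]) auto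
  then show ?thesis unfolding L2_norm_vec_eq_components[OF vL2] by simp
qed

lemma fixed_points_diff_estimate:
  assumes g1: "\<And>m. admissible_nonlinearity (g1 m)" and g2: "\<And>m. admissible_nonlinearity (g2 m)"
    and v1: "fixed_point g1 v1" and v2: "fixed_point g2 v2" and v2_le: "L2_norm_vec v2 \<le> \<rho>"
    and eps: "\<And>m. \<bar>eps m\<bar> \<le> \<epsilon>" and M1: "(\<Sum>m\<in>UNIV. sup_norm (grad (g1 m))) \<le> M"
    and M2: "(\<Sum>m\<in>UNIV. sup_norm (grad (g2 m))) \<le> M"
    and \<rho>: "\<rho> \<le> 1" and small: "\<epsilon> * M * kernel_norm / C \<le> \<rho> / (L2_norm_vec u0 + 1)"
  shows "L2_norm_vec (\<lambda>x. v1 x - v2 x) \<le> \<epsilon> / (1 - \<epsilon> * M * kernel_norm / C) * (kernel_norm / C)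
    * (L2_norm_vec u0 + 1) * (\<Sum>m\<in>UNIV. sup_norm (\<lambda>z. grad (g1 m) z - grad (g2 m) z))"
proof (cases "\<epsilon> * M * kernel_norm / C < 1")
  case True
  define S where "S = (\<Sum>m\<in>UNIV. sup_norm (\<lambda>z. grad (g1 m) z - grad (g2 m) z))"
  have "L2_norm_vec (\<lambda>x. u0 x + v2 x) \<le> L2_norm_vec u0 + 1"
    using L2_vec_add_diff(2)[OF u0_L2, of v2] v2 v2_le \<rho> unfolding fixed_point_def by linarith
  moreover have "0 \<le> \<epsilon> * kernel_norm" using eps[of undefined] kernel_norm_nonneg by simp
  moreover have "0 \<le> S"
    using admissible_nonlinearity_sup_norm_nonneg(2)[OF g1 g2] unfolding S_def by (simp add: sum_nonneg)
  ultimately have "C * L2_norm_vec (\<lambda>x. v1 x - v2 x)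
      \<le> \<epsilon> * kernel_norm * (M * L2_norm_vec (\<lambda>x. v1 x - v2 x) + (L2_norm_vec u0 + 1) * S)"
    using fixed_points_diff_bound[OF g1 g2 v1 v2 eps M1] unfolding S_def[symmetric]
    by (meson add_left_mono mult_left_mono mult_right_mono order_trans)
  from absorb_linear_self_bound[OF C_pos this True] show ?thesis unfolding S_def by (simp add: mult_ac)
next
  case False
  \<comment> \<open>then \<open>\<rho> = 1\<close> and \<open>u0 = 0\<close>; both fixed points vanish, and the right-hand side is \<open>0\<close>
    because it divides by \<open>1 - \<epsilon> * M * kernel_norm / C = 0\<close>\<close>
  have "\<rho> / (L2_norm_vec u0 + 1) \<le> 1" using \<rho> L2_norm_vec_nonneg[of u0] by (simp add: divide_le_eq)
  then have rhs: "1 - \<epsilon> * M * kernel_norm / C = 0" and "1 \<le> \<rho> / (L2_norm_vec u0 + 1)"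
    using False small by linarith+
  then have "L2_norm_vec u0 = 0" using \<rho> L2_norm_vec_nonneg[of u0] by (simp add: le_divide_eq)
  moreover have "\<epsilon> * M * kernel_norm \<le> C" using rhs C_pos by (simp add: field_simps)
  ultimately have "L2_norm_vec v1 = 0" "L2_norm_vec v2 = 0"
    using fixed_point_eq_0[OF g1 v1 _ eps M1] fixed_point_eq_0[OF g2 v2 _ eps M2] by auto
  then have "L2_norm_vec (\<lambda>x. v1 x - v2 x) = 0"
    using L2_vec_add_diff(4)[of v1 v2] v1 v2 L2_norm_vec_nonneg unfolding fixed_point_def
    by (metis add_0 order_antisym)
  then show ?thesis using rhs by simp
qed

end

theorem theorem4:
  fixes a b :: "'n::finite \<Rightarrow> real"
    and f K :: "'n \<Rightarrow> real \<Rightarrow> real"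
    and g1 g2 :: "'n \<Rightarrow> real^'n \<Rightarrow> real"
    and u0 up1 up2 :: "real \<Rightarrow> real^'n"
    and C M \<rho> :: real
    and eps :: "'n \<Rightarrow> real"
  assumes b_nz: "\<forall>m. b m \<noteq> 0"
    and C_pos: "C > 0"
    and C_bound: "\<forall>m p. p \<noteq> 0 \<longrightarrow> cmod (lambda_sym (a m) (b m) p) \<ge> C"
    and f_L2: "\<forall>m. L2_fun (f m)"
    and f_nz: "\<exists>m x. f m x \<noteq> 0"
    and K_L1: "\<forall>m. integrable lborel (K m)"
    and K_pos: "sqrt (\<Sum>m\<in>UNIV. (LINT x|lborel. \<bar>K m x\<bar>)^2) > 0"
    and M_pos: "M > 0"
    and g1_diff: "\<forall>m z. g1 m differentiable (at z)"
    and g2_diff: "\<forall>m z. g2 m differentiable (at z)"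
    and g1_0: "\<forall>m. g1 m 0 = 0"
    and g2_0: "\<forall>m. g2 m 0 = 0"
    and g1_nz: "\<exists>m z. g1 m z \<noteq> 0"
    and g2_nz: "\<exists>m z. g2 m z \<noteq> 0"
    and g1_bdd: "\<forall>m. bdd_above (range (\<lambda>z. norm (grad (g1 m) z)))"
    and g2_bdd: "\<forall>m. bdd_above (range (\<lambda>z. norm (grad (g2 m) z)))"
    and g1_M: "(\<Sum>m\<in>UNIV. sup_norm (grad (g1 m))) \<le> M"
    and g2_M: "(\<Sum>m\<in>UNIV. sup_norm (grad (g2 m))) \<le> M"
    and u0_L2: "L2_vec u0"
    and u0_eq: "\<forall>m. L_eq (a m) (b m) (\<lambda>x. u0 x $ m) (f m)"
    and rho: "0 < \<rho>" "\<rho> \<le> 1"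
    and eps_nonneg: "\<forall>m. eps m \<ge> 0"
    and eps_pos: "0 < Max (range eps)"
    and eps_small: "Max (range eps) \<le> \<rho> * C /
          (M * sqrt (\<Sum>m\<in>UNIV. (LINT x|lborel. \<bar>K m x\<bar>)^2) * (L2_norm_vec u0 + 1))"
    and up1_L2: "L2_vec up1" and up1_ball: "L2_norm_vec up1 \<le> \<rho>"
    and up1_fix: "\<forall>m. L_eq (a m) (b m) (\<lambda>x. up1 x $ m)
          (\<lambda>x. eps m * conv (K m) (\<lambda>y. g1 m (u0 y + up1 y)) x)"
    and up2_L2: "L2_vec up2" and up2_ball: "L2_norm_vec up2 \<le> \<rho>"
    and up2_fix: "\<forall>m. L_eq (a m) (b m) (\<lambda>x. up2 x $ m)
          (\<lambda>x. eps m * conv (K m) (\<lambda>y. g2 m (u0 y + up2 y)) x)"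
  shows "L2_norm_vec (\<lambda>x. (u0 x + up1 x) - (u0 x + up2 x)) \<le>
     Max (range eps) / (1 - Max (range eps) * M * sqrt (\<Sum>m\<in>UNIV. (LINT x|lborel. \<bar>K m x\<bar>)^2) / C)
     * (sqrt (\<Sum>m\<in>UNIV. (LINT x|lborel. \<bar>K m x\<bar>)^2) / C) * (L2_norm_vec u0 + 1)
     * (\<Sum>m\<in>UNIV. sup_norm (\<lambda>z. grad (g1 m) z - grad (g2 m) z))"
proof -
  interpret log_laplacian_system a b C K eps u0
    using C_pos C_bound K_L1 u0_L2 by unfold_locales auto
  have g1: "admissible_nonlinearity (g1 m)" and g2: "admissible_nonlinearity (g2 m)" for m
    using g1_diff g1_0 g1_bdd g2_diff g2_0 g2_bdd by (auto simp: admissible_nonlinearity_def)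
  have fixed: "fixed_point g1 up1" "fixed_point g2 up2"
    using up1_L2 up1_fix up2_L2 up2_fix by (auto simp: fixed_point_def source_def)
  have eps: "\<bar>eps m\<bar> \<le> Max (range eps)" for m
    using eps_nonneg by (simp add: Max_ge)
  have "0 < M * kernel_norm * (L2_norm_vec u0 + 1)"
    using M_pos K_pos L2_norm_vec_nonneg[of u0] unfolding kernel_norm_def by simp
  from eps_small[folded kernel_norm_def, unfolded pos_le_divide_eq[OF this]]
  have "Max (range eps) * M * kernel_norm / C \<le> \<rho> / (L2_norm_vec u0 + 1)"
    using C_pos L2_norm_vec_nonneg[of u0] by (simp add: field_simps)
  from fixed_points_diff_estimate[OF g1 g2 fixed up2_ball eps g1_M g2_M rho(2) this]
  show ?thesis unfolding kernel_norm_def by simp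
qed

end
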